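(* Let $A$ be a linear Nakayama algebra with $n$ simple modules and Jacobson radical $J$. Then $$\dim_K\operatorname{Ext}^1_A(J,J)=n-\big|\{\,i\in\{0,\dots,n-1\} : \operatorname{id}(e_iJ)\le 1\,\}\big|,$$ where $\operatorname{id}$ denotes injective dimension (the zero module being counted as having injective dimension at most one).
   Context: $K$ is a field; a linear Nakayama algebra with $n$ simple modules is a connected algebra $A=KQ/I$ with $Q$ the quiver $0\to1\to\cdots\to n-1$ and $I$ admissible; modules are finite-dimensional right modules, $e_0,\dots,e_{n-1}$ are the primitive idempotents, so $e_iJ$ is the radical of the indecomposable projective $e_iA$ (note $e_{n-1}J=0$). *)

theory Defs
  imports Main "HOL.Vector_Spaces" "HOL-Library.Function_Algebras"
begin

text \<open>The admissible ideal I of K Q, Q = 0 -> 1 -> ... -> n-1, is described by the set Z of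
  pairs (i,j) such that the (unique) path from i to j lies in I.  Every ideal of K Q is
  spanned by the paths it contains (there is at most one path between two vertices);
  it is a two-sided ideal iff Z is closed under extending paths, and admissible
  (R^m contained in I contained in R^2) iff it contains no trivial paths and no arrows
  (R^n = 0 automatically since Q is finite and acyclic).\<close>

definition lin_nakayama_ideal :: "nat \<Rightarrow> (nat \<times> nat) set \<Rightarrow> bool" where
  "lin_nakayama_ideal n Z \<longleftrightarrow>
     Z \<subseteq> {(i,j). i + 2 \<le> j \<and> j < n} \<and>
     (\<forall>i j i' j'. (i,j) \<in> Z \<longrightarrow> i' \<le> i \<longrightarrow> j \<le> j' \<longrightarrow> j' < n \<longrightarrow> (i',j') \<in> Z)"

text \<open>Matrices over the field are functions row => column => entry, vectors are
  functions index => entry; sizes are tracked explicitly.\<close>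

definition mmul :: "nat \<Rightarrow> (nat \<Rightarrow> nat \<Rightarrow> 'k::field) \<Rightarrow> (nat \<Rightarrow> nat \<Rightarrow> 'k) \<Rightarrow> nat \<Rightarrow> nat \<Rightarrow> 'k" where
  "mmul k A B = (\<lambda>r c. \<Sum>t<k. A r t * B t c)"

definition idm :: "nat \<Rightarrow> nat \<Rightarrow> nat \<Rightarrow> 'k::field" where
  "idm d = (\<lambda>r c. if r = c \<and> r < d then 1 else 0)"

definition mvec :: "nat \<Rightarrow> (nat \<Rightarrow> nat \<Rightarrow> 'k::field) \<Rightarrow> (nat \<Rightarrow> 'k) \<Rightarrow> nat \<Rightarrow> 'k" where
  "mvec d A v = (\<lambda>r. \<Sum>c<d. A r c * v c)"

definition bmat :: "nat \<Rightarrow> nat \<Rightarrow> (nat \<Rightarrow> nat \<Rightarrow> 'k::zero) \<Rightarrow> bool" where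
  "bmat r c A \<longleftrightarrow> (\<forall>x y. \<not> (x < r \<and> y < c) \<longrightarrow> A x y = 0)"

definition bvec :: "nat \<Rightarrow> (nat \<Rightarrow> 'k::zero) \<Rightarrow> bool" where
  "bvec d v \<longleftrightarrow> (\<forall>x. d \<le> x \<longrightarrow> v x = 0)"

text \<open>A representation: dimension vector and, for each arrow a : a -> a+1, a matrix
  of size dim(a+1) x dim(a).  Right A-modules = representations of (Q,I).\<close>

type_synonym 'k rep = "(nat \<Rightarrow> nat) \<times> (nat \<Rightarrow> nat \<Rightarrow> nat \<Rightarrow> 'k)"

definition dimv :: "'k rep \<Rightarrow> nat \<Rightarrow> nat" where "dimv M = fst M"
definition arr :: "'k rep \<Rightarrow> nat \<Rightarrow> nat \<Rightarrow> nat \<Rightarrow> 'k" where "arr M = snd M"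

fun pmap :: "'k::field rep \<Rightarrow> nat \<Rightarrow> nat \<Rightarrow> nat \<Rightarrow> nat \<Rightarrow> 'k" where
  "pmap M i 0 = (if i = 0 then idm (dimv M 0) else (\<lambda>_ _. 0))"
| "pmap M i (Suc j) = (if i = Suc j then idm (dimv M (Suc j))
      else if i \<le> j then mmul (dimv M j) (arr M j) (pmap M i j) else (\<lambda>_ _. 0))"

definition is_rep :: "nat \<Rightarrow> (nat \<times> nat) set \<Rightarrow> 'k::field rep \<Rightarrow> bool" where
  "is_rep n Z M \<longleftrightarrow> (\<forall>j. n \<le> j \<longrightarrow> dimv M j = 0) \<and>
     (\<forall>a. bmat (dimv M (Suc a)) (dimv M a) (arr M a)) \<and>
     (\<forall>i j. (i,j) \<in> Z \<longrightarrow> pmap M i j = (\<lambda>_ _. 0))"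

definition is_hom :: "nat \<Rightarrow> 'k::field rep \<Rightarrow> 'k rep \<Rightarrow> (nat \<Rightarrow> nat \<Rightarrow> nat \<Rightarrow> 'k) \<Rightarrow> bool" where
  "is_hom n M N g \<longleftrightarrow> (\<forall>j. bmat (dimv N j) (dimv M j) (g j)) \<and>
     (\<forall>a. Suc a < n \<longrightarrow>
        mmul (dimv M (Suc a)) (g (Suc a)) (arr M a) = mmul (dimv N a) (arr N a) (g a))"

definition is_mono :: "'k::field rep \<Rightarrow> (nat \<Rightarrow> nat \<Rightarrow> nat \<Rightarrow> 'k) \<Rightarrow> bool" where
  "is_mono M g \<longleftrightarrow> (\<forall>j v. bvec (dimv M j) v \<longrightarrow> mvec (dimv M j) (g j) v = (\<lambda>_. 0) \<longrightarrow> v = (\<lambda>_. 0))"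

definition is_epi :: "'k::field rep \<Rightarrow> 'k rep \<Rightarrow> (nat \<Rightarrow> nat \<Rightarrow> nat \<Rightarrow> 'k) \<Rightarrow> bool" where
  "is_epi M N g \<longleftrightarrow> (\<forall>j w. bvec (dimv N j) w \<longrightarrow> (\<exists>v. bvec (dimv M j) v \<and> mvec (dimv M j) (g j) v = w))"

definition is_exact_at :: "'k::field rep \<Rightarrow> 'k rep \<Rightarrow> (nat \<Rightarrow> nat \<Rightarrow> nat \<Rightarrow> 'k) \<Rightarrow> (nat \<Rightarrow> nat \<Rightarrow> nat \<Rightarrow> 'k) \<Rightarrow> bool" where
  "is_exact_at M N f g \<longleftrightarrow> (\<forall>j w. bvec (dimv N j) w \<longrightarrow>
      (mvec (dimv N j) (g j) w = (\<lambda>_. 0) \<longleftrightarrow> (\<exists>v. bvec (dimv M j) v \<and> mvec (dimv M j) (f j) v = w)))"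

definition is_injective :: "nat \<Rightarrow> (nat \<times> nat) set \<Rightarrow> 'k::field rep \<Rightarrow> bool" where
  "is_injective n Z I \<longleftrightarrow> is_rep n Z I \<and>
     (\<forall>(X::'k rep) (Y::'k rep) \<iota> h. is_rep n Z X \<longrightarrow> is_rep n Z Y \<longrightarrow> is_hom n X Y \<iota> \<longrightarrow> is_mono X \<iota> \<longrightarrow>
        is_hom n X I h \<longrightarrow>
        (\<exists>h'. is_hom n Y I h' \<and> (\<forall>j. mmul (dimv Y j) (h' j) (\<iota> j) = h j)))"

text \<open>id(M) <= 1: there is an injective coresolution 0 -> M -> I0 -> I1 -> 0.
  (For M = 0 this holds with I0 = I1 = 0.)\<close>
definition inj_dim_le1 :: "nat \<Rightarrow> (nat \<times> nat) set \<Rightarrow> 'k::field rep \<Rightarrow> bool" where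
  "inj_dim_le1 n Z M \<longleftrightarrow> (\<exists>(I0::'k rep) (I1::'k rep) \<mu> \<pi>.
     is_injective n Z I0 \<and> is_injective n Z I1 \<and> is_hom n M I0 \<mu> \<and> is_hom n I0 I1 \<pi> \<and>
     is_mono M \<mu> \<and> is_epi I0 I1 \<pi> \<and> is_exact_at M I0 \<mu> \<pi>)"

text \<open>Ext^1(M,N) as the group of extensions of M by N: an extension is given by the
  representation with spaces N_a (+) M_a and arrows [[N_a, phi_a],[0, M_a]]; it satisfies
  the relations iff the cocycle condition below holds; two such are equivalent extensions
  iff their difference is a coboundary.\<close>

definition ext_cocycles :: "nat \<Rightarrow> (nat \<times> nat) set \<Rightarrow> 'k::field rep \<Rightarrow> 'k rep \<Rightarrow> (nat \<Rightarrow> nat \<Rightarrow> nat \<Rightarrow> 'k) set" where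
  "ext_cocycles n Z M N = {\<phi>. (\<forall>a. bmat (dimv N (Suc a)) (dimv M a) (\<phi> a)) \<and>
      (\<forall>i j. (i,j) \<in> Z \<longrightarrow>
         (\<Sum>a\<in>{i..<j}. mmul (dimv N (Suc a)) (pmap N (Suc a) j) (mmul (dimv M a) (\<phi> a) (pmap M i a)))
           = (\<lambda>_ _. 0))}"

definition ext_coboundaries :: "nat \<Rightarrow> 'k::field rep \<Rightarrow> 'k rep \<Rightarrow> (nat \<Rightarrow> nat \<Rightarrow> nat \<Rightarrow> 'k) set" where
  "ext_coboundaries n M N = {\<phi>. \<exists>g. (\<forall>j. bmat (dimv N j) (dimv M j) (g j)) \<and>
      \<phi> = (\<lambda>a. mmul (dimv N a) (arr N a) (g a) - mmul (dimv M (Suc a)) (g (Suc a)) (arr M a))}"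

definition cscale :: "'k::field \<Rightarrow> (nat \<Rightarrow> nat \<Rightarrow> nat \<Rightarrow> 'k) \<Rightarrow> nat \<Rightarrow> nat \<Rightarrow> nat \<Rightarrow> 'k" where
  "cscale c f = (\<lambda>a r s. c * f a r s)"

definition dim_Ext1 :: "nat \<Rightarrow> (nat \<times> nat) set \<Rightarrow> 'k::field rep \<Rightarrow> 'k rep \<Rightarrow> nat" where
  "dim_Ext1 n Z M N = vector_space.dim cscale (ext_cocycles n Z M N)
                      - vector_space.dim cscale (ext_coboundaries n M N)"

text \<open>Modules spanned by a set B of nonzero paths (pairs (i,j): path from i to j) closed
  under right multiplication modulo I; the arrow a acts by right multiplication
  (path (i,a) |-> path (i,a+1), which is zero iff it is not in B).\<close>

definition pbasis :: "nat \<Rightarrow> (nat \<times> nat) set \<Rightarrow> nat \<Rightarrow> nat list" where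
  "pbasis n B j = filter (\<lambda>i. (i,j) \<in> B) (if j < n then [0..<n] else [])"

definition pathmod :: "nat \<Rightarrow> (nat \<times> nat) set \<Rightarrow> 'k::field rep" where
  "pathmod n B = (\<lambda>j. length (pbasis n B j),
     \<lambda>a r c. if r < length (pbasis n B (Suc a)) \<and> c < length (pbasis n B a) \<and>
                pbasis n B (Suc a) ! r = pbasis n B a ! c then 1 else 0)"

definition radJ :: "nat \<Rightarrow> (nat \<times> nat) set \<Rightarrow> 'k::field rep" where
  "radJ n Z = pathmod n {(i,j). i < j \<and> j < n \<and> (i,j) \<notin> Z}"

definition eJ :: "nat \<Rightarrow> (nat \<times> nat) set \<Rightarrow> nat \<Rightarrow> 'k::field rep" where
  "eJ n Z i = pathmod n {(i',j). i' = i \<and> i < j \<and> j < n \<and> (i,j) \<notin> Z}"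

end

theory Submission
  imports Defs
begin

text \<open>With \<open>e\<^sub>iA = [i, proj_end i)\<close>, the radical is the sum of the interval modules
  \<open>e\<^sub>iJ = [i+1, proj_end i)\<close>, and the indecomposable injectives are the intervals
  \<open>[inj_start b, b)\<close>.

  \<^item> Cocycles \<open>J \<rightarrow> J\<close> are written in path coordinates.  For a pair
    \<open>q < p < proj_end q < proj_end p \<le> proj_end (q+1)\<close>, the sum over \<open>a\<close> of the coefficient of
    \<open>p \<rightarrow> a+1\<close> in the image of \<open>q \<rightarrow> a\<close> telescopes to zero on coboundaries.  At every other
    pair with \<open>q < p\<close> and \<open>proj_end q < proj_end p\<close> this sum vanishes
    for every cocycle, and a cocycle all of whose sums vanish can be integrated to a coboundary.
    Hence these pairs index a basis of \<open>Ext\<^sup>1(J, J)\<close>.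
  \<^item> For fixed \<open>p\<close> the only candidate is \<open>q = inj_start (proj_end p) - 1\<close>, and it is a pair iff
    \<open>inj_start (proj_end p) \<noteq> inj_start (p+1)\<close>.  Otherwise the injective envelope
    \<open>[inj_start (proj_end p), proj_end p)\<close> of \<open>e\<^sub>pJ\<close> has the injective cokernel
    \<open>[inj_start (p+1), p+1)\<close>; if it is a pair, a diagram chase along the zero relation
    \<open>q \<rightarrow> proj_end p - 1\<close> rules out injective coresolutions of length one.\<close>

section \<open>Matrices and vectors as functions\<close>

lemma sum_apply: "(\<Sum>a\<in>A. F a) x = (\<Sum>a\<in>A. F a x)"
  by (induction A rule: infinite_finite_induct) auto

lemma sum_lessThan_eq_single:
  fixes f :: "nat \<Rightarrow> 'a::comm_monoid_add"
  assumes "\<And>t. t < d \<Longrightarrow> t \<noteq> c \<Longrightarrow> f t = 0"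
  shows "(\<Sum>t<d. f t) = (if c < d then f c else 0)"
proof (cases "c < d")
  case True
  have "(\<Sum>t<d. f t) = (\<Sum>t<d. if t = c then f c else 0)"
    by (rule sum.cong) (use assms in auto)
  with True show ?thesis by simp
qed (use assms in \<open>simp add: sum.neutral\<close>)

lemma sum_atLeastLessThan_telescope:
  fixes G :: "nat \<Rightarrow> 'a::ab_group_add"
  assumes "i \<le> j"
  shows "(\<Sum>a\<in>{i..<j}. G a - G (Suc a)) = G i - G j"
  using sum_Suc_diff'[OF assms, of "\<lambda>a. - G a"] by simp

lemma bmat_mmul: "bmat r c A \<Longrightarrow> bmat c d B \<Longrightarrow> bmat r d (mmul c A B)"
  unfolding bmat_def mmul_def by auto

lemma bmat_diff:
  fixes A B :: "nat \<Rightarrow> nat \<Rightarrow> 'a::ab_group_add"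
  shows "bmat r c A \<Longrightarrow> bmat r c B \<Longrightarrow> bmat r c (A - B)"
  unfolding bmat_def by auto

lemma bmat_idm: "bmat d d (idm d)"
  unfolding bmat_def idm_def by auto

lemma bmat_zero: "bmat r c (\<lambda>_ _. 0)"
  unfolding bmat_def by auto

lemma bmat_0_rows: "bmat 0 c A \<Longrightarrow> A = (\<lambda>_ _. 0)"
  unfolding bmat_def by auto

lemma mmul_assoc: "mmul d2 A (mmul d1 B C) = mmul d1 (mmul d2 A B) (C :: nat \<Rightarrow> nat \<Rightarrow> 'k::field)"
  unfolding mmul_def
  by (auto simp: fun_eq_iff sum_distrib_left sum_distrib_right mult.assoc intro: sum.swap)

lemma mmul_idm_left:
  fixes B :: "nat \<Rightarrow> nat \<Rightarrow> 'k::field"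
  assumes "bmat d c B"
  shows "mmul d (idm d) B = B"
proof (intro ext)
  fix x y
  have "mmul d (idm d) B x y = (\<Sum>t<d. if t = x then (if x < d then B x y else 0) else 0)"
    unfolding mmul_def idm_def by (rule sum.cong) auto
  also have "\<dots> = B x y" using assms unfolding bmat_def by (subst sum.delta) auto
  finally show "mmul d (idm d) B x y = B x y" .
qed

lemma mmul_idm_right:
  fixes A :: "nat \<Rightarrow> nat \<Rightarrow> 'k::field"
  assumes "bmat r d A"
  shows "mmul d A (idm d) = A"
proof (intro ext)
  fix x y
  have "mmul d A (idm d) x y = (\<Sum>t<d. if t = y then (if y < d then A x y else 0) else 0)"
    unfolding mmul_def idm_def by (rule sum.cong) auto
  also have "\<dots> = A x y" using assms unfolding bmat_def by (subst sum.delta) auto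
  finally show "mmul d A (idm d) x y = A x y" .
qed

lemma mmul_zero_left: "mmul d (\<lambda>_ _. 0) B = (\<lambda>_ _. (0::'k::field))"
  unfolding mmul_def by simp

lemma mmul_zero_right: "mmul d A (\<lambda>_ _. 0) = (\<lambda>_ _. (0::'k::field))"
  unfolding mmul_def by simp

lemma mvec_mmul: "mvec d (mmul d' A B) v = mvec d' A (mvec d B (v :: nat \<Rightarrow> 'k::field))"
  unfolding mvec_def mmul_def
  by (auto simp: fun_eq_iff sum_distrib_left sum_distrib_right mult.assoc intro: sum.swap)

lemma mvec_diff: "mvec d A (u - v) = mvec d A u - mvec d A (v :: nat \<Rightarrow> 'k::field)"
  unfolding mvec_def by (auto simp: fun_eq_iff sum_subtractf algebra_simps)

lemma mvec_zero_left: "mvec d (\<lambda>_ _. 0) v = (\<lambda>_. (0::'k::field))"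
  unfolding mvec_def by simp

lemma mmul_column: "(\<lambda>x. mmul d A B x y) = mvec d A (\<lambda>t. B t y)"
  unfolding mmul_def mvec_def by simp

lemma bvec_column: "bmat r c A \<Longrightarrow> bvec r (\<lambda>x. A x y)"
  unfolding bmat_def bvec_def by auto

lemma mvec_unit: "y < d \<Longrightarrow> mvec d A (\<lambda>t. if t = y then 1 else 0) = (\<lambda>x. A x y :: 'k::field)"
  unfolding mvec_def by (simp add: if_distrib sum.delta cong: if_cong)

lemma bvec_01_iff:
  "bvec (if C then 1 else 0) v \<longleftrightarrow> (\<forall>x. v x \<noteq> (0::'k::zero) \<longrightarrow> C \<and> x = 0)"
  unfolding bvec_def by (cases C) (simp_all, metis One_nat_def less_one not_le)

lemma mvec_01: "mvec (if C then 1 else 0) A v = (\<lambda>x. if C then A x 0 * v 0 else (0::'k::field))"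
  unfolding mvec_def by auto

lemma mmul_01: "mmul (if C then 1 else 0) A B x y = (if C then A x 0 * B 0 y else (0::'k::field))"
  unfolding mmul_def by auto

section \<open>Path maps and morphisms of representations\<close>

definition arrows_bounded :: "'k::field rep \<Rightarrow> bool" where
  "arrows_bounded M \<longleftrightarrow> (\<forall>a. bmat (dimv M (Suc a)) (dimv M a) (arr M a))"

lemma is_rep_arrows_bounded: "is_rep n Z M \<Longrightarrow> arrows_bounded M"
  unfolding is_rep_def arrows_bounded_def by auto

lemma is_hom_bmat: "is_hom n M N g \<Longrightarrow> bmat (dimv N j) (dimv M j) (g j)"
  unfolding is_hom_def by blast

lemma is_hom_commute:
  "is_hom n M N g \<Longrightarrow> Suc a < n \<Longrightarrow>
     mmul (dimv M (Suc a)) (g (Suc a)) (arr M a) = mmul (dimv N a) (arr N a) (g a)"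
  unfolding is_hom_def by blast

lemma pmap_bmat: "arrows_bounded M \<Longrightarrow> bmat (dimv M j) (dimv M i) (pmap M i j)"
proof (induction j)
  case (Suc j)
  then show ?case
    using bmat_mmul[of "dimv M (Suc j)" "dimv M j" "arr M j" "dimv M i" "pmap M i j"]
    unfolding arrows_bounded_def by (auto simp: bmat_idm bmat_zero)
qed (auto simp: bmat_idm bmat_zero)

lemma pmap_refl: "pmap M i i = idm (dimv M i)"
  by (cases i) auto

lemma pmap_trans:
  assumes M: "arrows_bounded M" and "i \<le> m" "m \<le> k"
  shows "pmap M i k = mmul (dimv M m) (pmap M m k) (pmap M i m)"
  using \<open>m \<le> k\<close>
proof (induction k)
  case 0
  with \<open>i \<le> m\<close> show ?case using mmul_idm_left[OF pmap_bmat[OF M, of 0 0]] by (simp add: pmap_refl)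
next
  case (Suc k)
  show ?case
  proof (cases "m = Suc k")
    case True
    then show ?thesis using mmul_idm_left[OF pmap_bmat[OF M, of "Suc k" i]] by (simp only: pmap_refl)
  next
    case False
    with Suc.prems have mk: "m \<le> k" by simp
    have "pmap M i (Suc k) = mmul (dimv M k) (arr M k) (mmul (dimv M m) (pmap M m k) (pmap M i m))"
      using mk \<open>i \<le> m\<close> Suc.IH by simp
    also have "\<dots> = mmul (dimv M m) (mmul (dimv M k) (arr M k) (pmap M m k)) (pmap M i m)"
      by (rule mmul_assoc)
    also have "mmul (dimv M k) (arr M k) (pmap M m k) = pmap M m (Suc k)"
      using mk by simp
    finally show ?thesis .
  qed
qed

lemma pmap_Suc_source:
  assumes M: "arrows_bounded M" and "i < k"
  shows "pmap M i k = mmul (dimv M (Suc i)) (pmap M (Suc i) k) (arr M i)"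
proof -
  have "pmap M i (Suc i) = arr M i"
    using mmul_idm_right[of "dimv M (Suc i)" "dimv M i" "arr M i"] M
    unfolding arrows_bounded_def by (simp add: pmap_refl)
  then show ?thesis using pmap_trans[OF M, of i "Suc i" k] \<open>i < k\<close> by simp
qed

lemma is_hom_pmap:
  assumes g: "is_hom n M N g" and "i \<le> j" "j < n"
  shows "mmul (dimv M j) (g j) (pmap M i j) = mmul (dimv N i) (pmap N i j) (g i)"
  using \<open>i \<le> j\<close> \<open>j < n\<close>
proof (induction j)
  case 0
  then show ?case
    using mmul_idm_left[OF is_hom_bmat[OF g]] mmul_idm_right[OF is_hom_bmat[OF g]] by simp
next
  case (Suc j)
  show ?case
  proof (cases "i = Suc j")
    case True
    then show ?thesis
      using mmul_idm_left[OF is_hom_bmat[OF g]] mmul_idm_right[OF is_hom_bmat[OF g]]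
      by (simp only: pmap_refl)
  next
    case False
    with Suc.prems have ij: "i \<le> j" by simp
    have "mmul (dimv M (Suc j)) (g (Suc j)) (pmap M i (Suc j))
        = mmul (dimv M j) (mmul (dimv M (Suc j)) (g (Suc j)) (arr M j)) (pmap M i j)"
      using ij by (simp add: mmul_assoc)
    also have "\<dots> = mmul (dimv M j) (mmul (dimv N j) (arr N j) (g j)) (pmap M i j)"
      using is_hom_commute[OF g] Suc.prems by simp
    also have "\<dots> = mmul (dimv N j) (arr N j) (mmul (dimv N i) (pmap N i j) (g i))"
      using Suc ij by (simp add: mmul_assoc[symmetric])
    also have "\<dots> = mmul (dimv N i) (pmap N i (Suc j)) (g i)"
      using ij by (simp add: mmul_assoc)
    finally show ?thesis .
  qed
qed

lemma is_exact_at_comp_zero: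
  assumes ex: "is_exact_at M N f g" and f: "bmat (dimv N j) (dimv M j) (f j)"
  shows "mmul (dimv N j) (g j) (f j) = (\<lambda>_ _. (0::'k::field))"
proof (intro ext)
  fix x y
  show "mmul (dimv N j) (g j) (f j) x y = 0"
  proof (cases "y < dimv M j")
    case True
    have "bvec (dimv M j) (\<lambda>t. if t = y then 1 else 0)" unfolding bvec_def using True by auto
    moreover have "mvec (dimv M j) (f j) (\<lambda>t. if t = y then 1 else 0) = (\<lambda>t. f j t y)"
      using True by (rule mvec_unit)
    ultimately have "mvec (dimv N j) (g j) (\<lambda>t. f j t y) = (\<lambda>_. 0)"
      using ex bvec_column[OF f] unfolding is_exact_at_def by blast
    then show ?thesis by (metis mmul_column)
  next
    case False
    then show ?thesis using f unfolding mmul_def bmat_def by auto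
  qed
qed

definition vscale :: "'k::field \<Rightarrow> (nat \<Rightarrow> 'k) \<Rightarrow> nat \<Rightarrow> 'k" where
  "vscale c v = (\<lambda>x. c * v x)"

lemma vector_space_vscale: "vector_space (vscale :: 'k::field \<Rightarrow> _)"
  unfolding vector_space_def vscale_def by (auto simp: fun_eq_iff algebra_simps)

lemma sum_vscale_units:
  assumes "bmat dY dX A" "y < dX"
  shows "(\<Sum>s<dY. vscale (A s y) (\<lambda>x. if x = s then 1 else 0)) = (\<lambda>x. A x y :: 'k::field)"
proof (intro ext)
  fix x
  have "(\<Sum>s<dY. vscale (A s y) (\<lambda>x. if x = s then 1 else 0)) x = (\<Sum>s<dY. if s = x then A x y else 0)"
    unfolding vscale_def sum_apply by (rule sum.cong) auto
  also have "\<dots> = A x y" using assms unfolding bmat_def by (subst sum.delta) auto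
  finally show "(\<Sum>s<dY. vscale (A s y) (\<lambda>x. if x = s then 1 else 0)) x = A x y" .
qed

lemma row_factors_through_injective:
  fixes A :: "nat \<Rightarrow> nat \<Rightarrow> 'k::field" and h :: "nat \<Rightarrow> 'k"
  assumes A: "bmat dY dX A"
    and inj: "\<And>v. bvec dX v \<Longrightarrow> mvec dX A v = (\<lambda>_. 0) \<Longrightarrow> v = (\<lambda>_. 0)"
  shows "\<exists>f. \<forall>y<dX. (\<Sum>s<dY. f s * A s y) = h y"
proof -
  interpret P: vector_space_pair "vscale :: 'k \<Rightarrow> _" "vscale :: 'k \<Rightarrow> _"
    by (intro vector_space_pair.intro vector_space_vscale)
  define T where "T = mvec dX A"
  define S where "S = {v :: nat \<Rightarrow> 'k. bvec dX v}"
  have lin: "Vector_Spaces.linear vscale vscale T"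
    by (rule Vector_Spaces.linear_iff[THEN iffD2], intro conjI allI vector_space_vscale)
      (auto simp: T_def mvec_def vscale_def fun_eq_iff sum.distrib sum_distrib_left algebra_simps)
  have sub: "P.vs1.subspace S"
    unfolding P.vs1.subspace_def S_def bvec_def vscale_def by auto
  have "inj_on T S"
  proof (rule inj_onI)
    fix v w assume "v \<in> S" "w \<in> S" "T v = T w"
    then have "bvec dX (v - w)" "mvec dX A (v - w) = (\<lambda>_. 0)"
      unfolding S_def T_def bvec_def mvec_diff by (auto simp: fun_eq_iff)
    then have "v - w = (\<lambda>_. 0)" using inj by blast
    then show "v = w" by (simp add: fun_eq_iff)
  qed
  then obtain g where g: "Vector_Spaces.linear vscale vscale g" and gT: "\<forall>v\<in>S. g (T v) = v"
    using P.linear_exists_left_inverse_on[OF lin sub] by blast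
  define e where "e s = (\<lambda>x::nat. if x = s then (1::'k) else 0)" for s
  define f where "f s = (\<Sum>t<dX. h t * g (e s) t)" for s
  have "(\<Sum>s<dY. f s * A s y) = h y" if y: "y < dX" for y
  proof -
    have Te: "(\<Sum>s<dY. vscale (A s y) (e s)) = T (e y)"
      unfolding T_def e_def mvec_unit[OF y] by (rule sum_vscale_units[OF A y])
    have "g (\<Sum>s<dY. vscale (A s y) (e s)) = (\<Sum>s<dY. vscale (A s y) (g (e s)))"
      unfolding P.linear_sum[OF g] P.linear_scale[OF g] ..
    then have "(\<lambda>t. \<Sum>s<dY. A s y * g (e s) t) = g (\<Sum>s<dY. vscale (A s y) (e s))"
      by (simp add: fun_eq_iff sum_apply vscale_def)
    also have "\<dots> = e y" using Te gT y unfolding S_def bvec_def e_def by simp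
    finally have ge: "(\<lambda>t. \<Sum>s<dY. A s y * g (e s) t) = e y" .
    have "(\<Sum>s<dY. f s * A s y) = (\<Sum>t<dX. h t * (\<Sum>s<dY. A s y * g (e s) t))"
      unfolding f_def
      by (simp add: sum_distrib_left sum_distrib_right sum.swap[of _ "{..<dY}"] algebra_simps)
    also have "\<dots> = (\<Sum>t<dX. h t * e y t)" using fun_cong[OF ge] by simp
    finally show ?thesis unfolding e_def using y by (simp add: if_distrib sum.delta cong: if_cong)
  qed
  then show ?thesis by blast
qed

lemma is_hom_comp:
  assumes f: "is_hom n M N f" and g: "is_hom n N P g"
  shows "is_hom n M P (\<lambda>j. mmul (dimv N j) (g j) (f j))"
  unfolding is_hom_def
proof (intro conjI allI impI)
  show "bmat (dimv P j) (dimv M j) (mmul (dimv N j) (g j) (f j))" for j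
    using is_hom_bmat[OF f] is_hom_bmat[OF g] by (rule bmat_mmul[rotated])
  fix a assume a: "Suc a < n"
  have "mmul (dimv M (Suc a)) (mmul (dimv N (Suc a)) (g (Suc a)) (f (Suc a))) (arr M a)
      = mmul (dimv N a) (mmul (dimv N (Suc a)) (g (Suc a)) (arr N a)) (f a)"
    using is_hom_commute[OF f a] by (simp add: mmul_assoc[symmetric])
  also have "\<dots> = mmul (dimv P a) (arr P a) (mmul (dimv N a) (g a) (f a))"
    using is_hom_commute[OF g a] by (simp add: mmul_assoc)
  finally show "mmul (dimv M (Suc a)) (mmul (dimv N (Suc a)) (g (Suc a)) (f (Suc a))) (arr M a)
      = mmul (dimv P a) (arr P a) (mmul (dimv N a) (g a) (f a))" .
qed

lemma is_exact_at_inj: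
  assumes "is_exact_at M N f g" "dimv M j = 0" "bvec (dimv N j) v"
    and "mvec (dimv N j) (g j) v = (\<lambda>_. 0)"
  shows "v = (\<lambda>_. (0::'k::field))"
  using assms unfolding is_exact_at_def by (auto simp: mvec_def)

lemma mono_column_nonzero:
  assumes "is_mono M f" "dimv M j = 1"
  shows "(\<lambda>x. f j x 0) \<noteq> (\<lambda>_. (0::'k::field))"
proof
  define e :: "nat \<Rightarrow> 'k" where "e t = (if t = 0 then 1 else 0)" for t
  assume "(\<lambda>x. f j x 0) = (\<lambda>_. 0)"
  then have "mvec (dimv M j) (f j) e = (\<lambda>_. 0)" using assms(2) by (simp add: mvec_def e_def)
  moreover have "bvec (dimv M j) e" using assms(2) by (simp add: bvec_def e_def)
  ultimately have "e = (\<lambda>_. 0)" using assms(1) unfolding is_mono_def by blast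
  then show False unfolding e_def by (metis one_neq_zero)
qed

lemma exact_arrow_preimage:
  fixes z z' :: "nat \<Rightarrow> 'k::field"
  assumes ex: "is_exact_at M N f g" and M: "dimv M (Suc a) = 0"
    and g: "is_hom n N P g" and "Suc a < n" and N: "arrows_bounded N"
    and z: "bvec (dimv N (Suc a)) z"
    and w: "mvec (dimv N a) (g a) z' = w"
    and lift: "mvec (dimv P a) (arr P a) w = mvec (dimv N (Suc a)) (g (Suc a)) z"
  shows "mvec (dimv N a) (arr N a) z' = z"
proof -
  let ?u = "mvec (dimv N a) (arr N a) z'"
  have "mvec (dimv N (Suc a)) (g (Suc a)) ?u = mvec (dimv P a) (arr P a) w"
    using is_hom_commute[OF g \<open>Suc a < n\<close>] w by (metis mvec_mmul)
  then have "mvec (dimv N (Suc a)) (g (Suc a)) (?u - z) = (\<lambda>_. 0)"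
    using lift by (simp add: mvec_diff fun_eq_iff)
  moreover have "bvec (dimv N (Suc a)) (?u - z)"
    using N z unfolding arrows_bounded_def bvec_def bmat_def mvec_def by auto
  ultimately have "?u - z = (\<lambda>_. 0)" by (rule is_exact_at_inj[OF ex M, rotated])
  then show ?thesis by (simp add: fun_eq_iff)
qed

section \<open>Interval representations\<close>

definition interval_rep :: "nat \<Rightarrow> nat \<Rightarrow> 'k::field rep" where
  "interval_rep a b = (\<lambda>j. if a \<le> j \<and> j < b then 1 else 0,
     \<lambda>k x y. if a \<le> k \<and> Suc k < b \<and> x = 0 \<and> y = 0 then 1 else 0)"

definition interval_map :: "nat \<Rightarrow> nat \<Rightarrow> nat \<Rightarrow> nat \<Rightarrow> nat \<Rightarrow> 'k::field" where
  "interval_map c d = (\<lambda>j x y. if c \<le> j \<and> j < d \<and> x = 0 \<and> y = 0 then 1 else 0)"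

lemma dimv_interval_rep:
  "dimv (interval_rep a b :: 'k::field rep) j = (if a \<le> j \<and> j < b then 1 else 0)"
  unfolding interval_rep_def dimv_def by simp

lemma arr_interval_rep:
  "arr (interval_rep a b :: 'k::field rep) k x y = (if a \<le> k \<and> Suc k < b \<and> x = 0 \<and> y = 0 then 1 else 0)"
  unfolding interval_rep_def arr_def by simp

lemma pmap_interval_rep:
  "pmap (interval_rep a b :: 'k::field rep) i j x y =
     (if i \<le> j \<and> a \<le> i \<and> j < b \<and> x = 0 \<and> y = 0 then 1 else 0)"
proof (induction j arbitrary: x y)
  case (Suc j)
  show ?case
  proof (cases "i \<le> j")
    case True
    then have "pmap (interval_rep a b :: 'k rep) i (Suc j) x y =
        mmul (dimv (interval_rep a b :: 'k rep) j) (arr (interval_rep a b) j)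
          (pmap (interval_rep a b) i j) x y"
      by simp
    then show ?thesis unfolding dimv_interval_rep mmul_01 arr_interval_rep Suc.IH using True by auto
  qed (auto simp: idm_def dimv_interval_rep)
qed (auto simp: idm_def dimv_interval_rep)

lemma pmap_interval_rep_idm:
  "a \<le> i \<Longrightarrow> i \<le> j \<Longrightarrow> j < b \<Longrightarrow> pmap (interval_rep a b :: 'k::field rep) i j = idm 1"
  by (auto simp: fun_eq_iff pmap_interval_rep idm_def)

lemma arr_interval_rep_idm:
  "a \<le> k \<Longrightarrow> Suc k < b \<Longrightarrow> arr (interval_rep a b :: 'k::field rep) k = idm 1"
  by (auto simp: fun_eq_iff arr_interval_rep idm_def)

lemma arr_interval_rep_zero:
  "\<not> (a \<le> k \<and> Suc k < b) \<Longrightarrow> arr (interval_rep a b :: 'k::field rep) k = (\<lambda>_ _. 0)"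
  by (auto simp: fun_eq_iff arr_interval_rep)

lemma interval_map_idm: "c \<le> j \<Longrightarrow> j < d \<Longrightarrow> interval_map c d j = (idm 1 :: nat \<Rightarrow> nat \<Rightarrow> 'k::field)"
  by (auto simp: fun_eq_iff interval_map_def idm_def)

lemma is_hom_interval_map:
  assumes "\<And>j. c \<le> j \<Longrightarrow> j < d \<Longrightarrow> a \<le> j \<and> j < b \<and> a' \<le> j \<and> j < b'"
    and "\<And>k. (a \<le> k \<and> Suc k < b \<and> c \<le> Suc k \<and> Suc k < d) \<longleftrightarrow> (a' \<le> k \<and> Suc k < b' \<and> c \<le> k \<and> k < d)"
  shows "is_hom n (interval_rep a b :: 'k::field rep) (interval_rep a' b') (interval_map c d)"
  unfolding is_hom_def
proof (intro conjI allI impI)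
  show "bmat (dimv (interval_rep a' b' :: 'k rep) j) (dimv (interval_rep a b :: 'k rep) j)
      (interval_map c d j)" for j
    using assms(1) unfolding bmat_def dimv_interval_rep interval_map_def by auto
  show "mmul (dimv (interval_rep a b :: 'k rep) (Suc k)) (interval_map c d (Suc k))
          (arr (interval_rep a b) k) =
        mmul (dimv (interval_rep a' b' :: 'k rep) k) (arr (interval_rep a' b') k) (interval_map c d k)" for k
    using assms(2)[of k] unfolding fun_eq_iff dimv_interval_rep mmul_01 arr_interval_rep interval_map_def
    by auto
qed

lemma is_hom_interval_incl:
  "a \<le> c \<Longrightarrow> is_hom n (interval_rep c b :: 'k::field rep) (interval_rep a b) (interval_map c b)"
  by (rule is_hom_interval_map) auto

lemma is_hom_interval_proj:
  "c \<le> b \<Longrightarrow> is_hom n (interval_rep a b :: 'k::field rep) (interval_rep a c) (interval_map a c)"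
  by (rule is_hom_interval_map) auto

lemma is_mono_interval_incl: "is_mono (interval_rep c b :: 'k::field rep) (interval_map c b)"
  unfolding is_mono_def dimv_interval_rep bvec_01_iff mvec_01
  by (auto simp: fun_eq_iff interval_map_def)

lemma is_epi_interval_proj:
  assumes "c \<le> b"
  shows "is_epi (interval_rep a b :: 'k::field rep) (interval_rep a c) (interval_map a c)"
  unfolding is_epi_def
proof (intro allI impI)
  fix j and w :: "nat \<Rightarrow> 'k"
  assume "bvec (dimv (interval_rep a c :: 'k rep) j) w"
  then have "bvec (dimv (interval_rep a b :: 'k rep) j) w \<and>
      mvec (dimv (interval_rep a b :: 'k rep) j) (interval_map a c j) w = w"
    using assms unfolding dimv_interval_rep bvec_01_iff mvec_01
    by (auto simp: fun_eq_iff interval_map_def)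
  then show "\<exists>v. bvec (dimv (interval_rep a b :: 'k rep) j) v \<and>
      mvec (dimv (interval_rep a b :: 'k rep) j) (interval_map a c j) v = w" by blast
qed

lemma is_exact_at_intervals:
  assumes "a \<le> c" "c \<le> b"
  shows "is_exact_at (interval_rep c b :: 'k::field rep) (interval_rep a b)
           (interval_map c b) (interval_map a c)"
  unfolding is_exact_at_def
proof (intro allI impI)
  fix j and w :: "nat \<Rightarrow> 'k"
  assume w: "bvec (dimv (interval_rep a b :: 'k rep) j) w"
  show "mvec (dimv (interval_rep a b :: 'k rep) j) (interval_map a c j) w = (\<lambda>_. 0) \<longleftrightarrow>
     (\<exists>v. bvec (dimv (interval_rep c b :: 'k rep) j) v \<and>
        mvec (dimv (interval_rep c b :: 'k rep) j) (interval_map c b j) v = w)"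
    using w assms unfolding dimv_interval_rep bvec_01_iff mvec_01
    by (cases "c \<le> j") (auto simp: fun_eq_iff interval_map_def)
qed

lemma is_hom_interval_restrict:
  fixes f :: "nat \<Rightarrow> nat \<Rightarrow> nat \<Rightarrow> 'k::field"
  assumes f: "is_hom n (interval_rep a b) N f" and "c \<le> b" and fc: "c < b \<Longrightarrow> f c = (\<lambda>_ _. 0)"
  shows "is_hom n (interval_rep a c) N (\<lambda>j. if j < c then f j else (\<lambda>_ _. 0))"
  unfolding is_hom_def
proof (intro conjI allI impI)
  show "bmat (dimv N j) (dimv (interval_rep a c :: 'k rep) j) (if j < c then f j else (\<lambda>_ _. 0))" for j
    using is_hom_bmat[OF f, of j] \<open>c \<le> b\<close> by (auto simp: dimv_interval_rep bmat_zero)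
  fix k assume k: "Suc k < n"
  show "mmul (dimv (interval_rep a c :: 'k rep) (Suc k)) (if Suc k < c then f (Suc k) else (\<lambda>_ _. 0))
      (arr (interval_rep a c) k) = mmul (dimv N k) (arr N k) (if k < c then f k else (\<lambda>_ _. 0))"
  proof (cases "Suc k < c")
    case True
    then have "arr (interval_rep a c :: 'k rep) k = arr (interval_rep a b) k"
      "dimv (interval_rep a c :: 'k rep) (Suc k) = dimv (interval_rep a b :: 'k rep) (Suc k)"
      using \<open>c \<le> b\<close> by (auto simp: fun_eq_iff arr_interval_rep dimv_interval_rep)
    with True show ?thesis using is_hom_commute[OF f k] by simp
  next
    case False
    show ?thesis
    proof (cases "Suc k = c")
      case True
      have "mmul (dimv N k) (arr N k) (f k) =
          mmul (dimv (interval_rep a b :: 'k rep) (Suc k)) (f c) (arr (interval_rep a b) k)"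
        using is_hom_commute[OF f k] True by simp
      also have "\<dots> = (\<lambda>_ _. 0)"
      proof (cases "c < b")
        case False
        with True have "arr (interval_rep a b :: 'k rep) k = (\<lambda>_ _. 0)" by (intro arr_interval_rep_zero) simp
        then show ?thesis by (simp add: mmul_zero_right)
      qed (use fc True in \<open>simp add: mmul_zero_left\<close>)
      finally show ?thesis using True by (simp add: mmul_zero_left)
    qed (use False in \<open>simp add: mmul_zero_left mmul_zero_right\<close>)
  qed
qed

section \<open>Dual families in vector spaces\<close>

context vector_space
begin

lemma independent_Un_dual_family:
  fixes c :: "'i \<Rightarrow> 'b \<Rightarrow> 'a" and e :: "'i \<Rightarrow> 'b"
  assumes b: "independent b"
    and lin: "\<And>i. i \<in> I \<Longrightarrow> Vector_Spaces.linear scale (*) (c i)"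
    and vanish: "\<And>i x. i \<in> I \<Longrightarrow> x \<in> b \<Longrightarrow> c i x = 0"
    and dual: "\<And>i j. i \<in> I \<Longrightarrow> j \<in> I \<Longrightarrow> c i (e j) = (if i = j then 1 else 0)"
  shows "independent (b \<union> e ` I)"
  unfolding independent_explicit_module
proof (intro allI impI)
  fix t u v
  assume t: "finite t" "t \<subseteq> b \<union> e ` I" and sum0: "(\<Sum>v\<in>t. scale (u v) v) = 0" and "v \<in> t"
  have c_on: "c i w = (if w = e i then 1 else 0)" if "i \<in> I" "w \<in> b \<union> e ` I" for i w
    using that vanish[of i w] dual[of i] dual[of i i] by (auto split: if_splits)
  have u_e: "u (e i) = 0" if i: "i \<in> I" "e i \<in> t" for i
  proof -
    interpret c: module_hom scale "(*)" "c i" using lin[OF i(1)] by (simp add: module_hom_iff_linear)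
    have "0 = c i (\<Sum>v\<in>t. scale (u v) v)" by (simp add: sum0)
    also have "\<dots> = (\<Sum>v\<in>t. if v = e i then u v else 0)"
      unfolding c.sum c.scale using c_on[OF i(1)] t(2) by (intro sum.cong) auto
    also have "\<dots> = u (e i)" using t(1) i(2) by simp
    finally show ?thesis by simp
  qed
  have "(\<Sum>v\<in>t \<inter> b. scale (u v) v) = (\<Sum>v\<in>t. scale (u v) v)"
    using t u_e by (intro sum.mono_neutral_left) auto
  then have "(\<Sum>v\<in>t \<inter> b. scale (u v) v) = 0" using sum0 by simp
  then show "u v = 0"
    using independentD[OF b, of "t \<inter> b" u v] t u_e \<open>v \<in> t\<close> by auto
qed

lemma dim_eq_dim_add_card_dual_family:
  fixes c :: "'i \<Rightarrow> 'b \<Rightarrow> 'a" and e :: "'i \<Rightarrow> 'b"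
  assumes W: "finite W" "B \<subseteq> span W" and I: "finite I"
    and sub: "B \<union> e ` I \<subseteq> V" and V: "V \<subseteq> span (B \<union> e ` I)"
    and lin: "\<And>i. i \<in> I \<Longrightarrow> Vector_Spaces.linear scale (*) (c i)"
    and vanish: "\<And>i x. i \<in> I \<Longrightarrow> x \<in> B \<Longrightarrow> c i x = 0"
    and dual: "\<And>i j. i \<in> I \<Longrightarrow> j \<in> I \<Longrightarrow> c i (e j) = (if i = j then 1 else 0)"
  shows "dim V = dim B + card I"
proof -
  obtain b where b: "b \<subseteq> B" "independent b" "B \<subseteq> span b" "card b = dim B"
    using basis_exists by blast
  have "finite b" using independent_span_bound[OF W(1) b(2)] b(1) W(2) by auto
  have "inj_on e I" using dual by (intro inj_onI) (metis one_neq_zero)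
  have disj: "b \<inter> e ` I = {}" using b(1) vanish dual by fastforce
  have "B \<union> e ` I \<subseteq> span (b \<union> e ` I)"
    using b(3) span_mono[of b "b \<union> e ` I"] span_superset[of "b \<union> e ` I"] by auto
  then have "V \<subseteq> span (b \<union> e ` I)"
    using V span_mono[of "B \<union> e ` I" "span (b \<union> e ` I)"] by (simp add: span_span)
  moreover have "independent (b \<union> e ` I)"
    using b(1,2) vanish by (intro independent_Un_dual_family[OF _ lin _ dual]) auto
  ultimately have "dim V = card (b \<union> e ` I)" using sub b(1) by (intro basis_card_eq_dim[symmetric]) auto
  also have "\<dots> = card b + card I"
    using \<open>finite b\<close> I disj card_image[OF \<open>inj_on e I\<close>] by (simp add: card_Un_disjoint)
  finally show ?thesis using b(4) by simp
qed

end

lemma vector_space_cscale: "vector_space (cscale :: 'k::field \<Rightarrow> (nat \<Rightarrow> nat \<Rightarrow> nat \<Rightarrow> 'k) \<Rightarrow> _)"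
  unfolding vector_space_def cscale_def by (auto simp: fun_eq_iff algebra_simps)

lemma vector_space_mult: "vector_space ((*) :: 'k::field \<Rightarrow> 'k \<Rightarrow> 'k)"
  unfolding vector_space_def by (auto simp: algebra_simps)

section \<open>Combinatorics of a linear Nakayama algebra\<close>

lemma filter_upt_between: "filter (\<lambda>i. a \<le> i \<and> i < b) [0..<m] = [a..<min b m]"
proof (induction m)
  case (Suc m)
  show ?case
  proof (cases "a \<le> m \<and> m < b")
    case True
    then have "min b (Suc m) = Suc (min b m)" "min b m = m" by auto
    with Suc True show ?thesis by simp
  qed (use Suc in \<open>auto simp: min_def\<close>)
qed simp

lemma filter_upt_eq_single: "filter (\<lambda>x. x = i \<and> C) [0..<m] = (if C \<and> i < m then [i] else [])"
  by (induction m) auto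

locale lin_nakayama =
  fixes n :: nat and Z :: "(nat \<times> nat) set"
  assumes ideal: "lin_nakayama_ideal n Z"
begin

lemma Z_bounds: "(i,j) \<in> Z \<Longrightarrow> i + 2 \<le> j \<and> j < n"
  using ideal unfolding lin_nakayama_ideal_def by auto

lemma Z_closed: "(i,j) \<in> Z \<Longrightarrow> i' \<le> i \<Longrightarrow> j \<le> j' \<Longrightarrow> j' < n \<Longrightarrow> (i',j') \<in> Z"
  using ideal unfolding lin_nakayama_ideal_def by blast

text \<open>The projective \<open>e\<^sub>i A\<close> is the interval representation \<open>[i, proj_end i)\<close>, and the
  indecomposable injective with socle \<open>S\<^sub>b\<^sub>-\<^sub>1\<close> is \<open>[inj_start b, b)\<close>.\<close>

definition proj_end :: "nat \<Rightarrow> nat" where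
  "proj_end i = (LEAST j. j = n \<or> (i,j) \<in> Z)"

definition inj_start :: "nat \<Rightarrow> nat" where
  "inj_start b = (LEAST a. b \<le> proj_end a)"

lemma proj_end_le: "proj_end i \<le> n"
  unfolding proj_end_def by (rule Least_le) simp

lemma proj_end_cases: "proj_end i = n \<or> (i, proj_end i) \<in> Z"
  unfolding proj_end_def by (rule LeastI[of _ n]) simp

lemma mem_Z_iff: "(i,j) \<in> Z \<longleftrightarrow> j < n \<and> proj_end i \<le> j"
proof
  assume "(i,j) \<in> Z"
  then show "j < n \<and> proj_end i \<le> j" using Z_bounds unfolding proj_end_def by (auto intro: Least_le)
next
  assume j: "j < n \<and> proj_end i \<le> j"
  then have "(i, proj_end i) \<in> Z" using proj_end_cases[of i] by auto
  then show "(i,j) \<in> Z" using Z_closed j by blast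
qed

lemma proj_end_mono: "i \<le> i' \<Longrightarrow> proj_end i \<le> proj_end i'"
  using proj_end_cases[of i'] Z_bounds[of i' "proj_end i'"] Z_closed[of i' "proj_end i'" i]
  by (auto simp: proj_end_le mem_Z_iff)

lemma proj_end_gt: "i < n \<Longrightarrow> i < proj_end i"
  using proj_end_cases[of i] Z_bounds[of i "proj_end i"] by auto

lemma inj_start_le_iff: "b \<le> n \<Longrightarrow> inj_start b \<le> a \<longleftrightarrow> b \<le> proj_end a"
proof
  assume b: "b \<le> n"
  have "proj_end (n - 1) = n"
    using proj_end_cases[of "n - 1"] Z_bounds[of "n - 1" "proj_end (n - 1)"] by auto
  with b have "b \<le> proj_end (n - 1)" by simp
  then have "b \<le> proj_end (inj_start b)"
    unfolding inj_start_def by (rule LeastI)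
  then show "inj_start b \<le> a \<Longrightarrow> b \<le> proj_end a" using proj_end_mono[of "inj_start b" a] by simp
next
  show "b \<le> proj_end a \<Longrightarrow> inj_start b \<le> a" unfolding inj_start_def by (rule Least_le)
qed

lemma inj_start_mono: "b \<le> b' \<Longrightarrow> b' \<le> n \<Longrightarrow> inj_start b \<le> inj_start b'"
  using inj_start_le_iff[of b' "inj_start b'"] inj_start_le_iff[of b "inj_start b'"] by simp

lemma inj_start_less:
  assumes "1 \<le> b" "b \<le> n"
  shows "inj_start b < b"
proof -
  have "b - 1 < proj_end (b - 1)" using proj_end_gt[of "b - 1"] assms by simp
  then have "b \<le> proj_end (b - 1)" by simp
  then have "inj_start b \<le> b - 1" using inj_start_le_iff[OF assms(2)] by blast
  with assms(1) show ?thesis by simp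
qed

section \<open>The radical as a representation\<close>

text \<open>The space of \<open>J\<close> at vertex \<open>j\<close> has basis the nonzero paths \<open>s \<rightarrow> j\<close> of positive length,
  i.e.\ \<open>rad_start j \<le> s < j\<close>; the \<open>x\<close>-th basis vector is the path starting at \<open>rad_start j + x\<close>.\<close>

definition rad_basis :: "nat \<Rightarrow> nat \<Rightarrow> bool" where
  "rad_basis j s \<longleftrightarrow> s < j \<and> j < proj_end s"

definition rad_start :: "nat \<Rightarrow> nat" where
  "rad_start j = inj_start (Suc j)"

definition rad_dim :: "nat \<Rightarrow> nat" where
  "rad_dim j = (if j < n then j - rad_start j else 0)"

lemma rad_basis_iff: "rad_basis j s \<longleftrightarrow> j < n \<and> rad_start j \<le> s \<and> s < j"
  unfolding rad_basis_def rad_start_def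
  using inj_start_le_iff[of "Suc j" s] proj_end_le[of s] by auto

lemma rad_start_mono: "j \<le> j' \<Longrightarrow> j' < n \<Longrightarrow> rad_start j \<le> rad_start j'"
  unfolding rad_start_def by (rule inj_start_mono) auto

lemma rad_basis_offset: "rad_basis j s \<Longrightarrow> s - rad_start j < rad_dim j \<and> rad_start j + (s - rad_start j) = s"
  unfolding rad_basis_iff rad_dim_def by auto

lemma rad_basis_index: "x < rad_dim j \<Longrightarrow> rad_basis j (rad_start j + x)"
  unfolding rad_basis_iff rad_dim_def by (auto split: if_splits)

lemma pbasis_rad:
  "pbasis n {(i,j). i < j \<and> j < n \<and> (i,j) \<notin> Z} j = (if j < n then [rad_start j..<j] else [])"
proof (cases "j < n")
  case True
  then have "(i,j) \<in> {(i,j). i < j \<and> j < n \<and> (i,j) \<notin> Z} \<longleftrightarrow> rad_start j \<le> i \<and> i < j" for i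
    using rad_basis_iff[of j i] mem_Z_iff[of i j] unfolding rad_basis_def by auto
  then show ?thesis
    unfolding pbasis_def using True filter_upt_between[of "rad_start j" j n] by (simp add: min_def)
qed (simp add: pbasis_def)

lemma dimv_radJ: "dimv (radJ n Z :: 'k::field rep) j = rad_dim j"
  unfolding radJ_def pathmod_def dimv_def rad_dim_def using pbasis_rad by simp

lemma arr_radJ: "arr (radJ n Z :: 'k::field rep) a x y =
   (if x < rad_dim (Suc a) \<and> y < rad_dim a \<and> rad_start (Suc a) + x = rad_start a + y then 1 else 0)"
proof -
  let ?B = "{(i,j). i < j \<and> j < n \<and> (i,j) \<notin> Z}"
  have "x < rad_dim (Suc a) \<Longrightarrow> y < rad_dim a \<Longrightarrow>
      pbasis n ?B (Suc a) ! x = pbasis n ?B a ! y \<longleftrightarrow> rad_start (Suc a) + x = rad_start a + y"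
    unfolding pbasis_rad rad_dim_def by (auto simp del: upt_Suc simp add: nth_upt split: if_splits)
  then show ?thesis
    unfolding radJ_def pathmod_def arr_def using pbasis_rad[of a] pbasis_rad[of "Suc a"]
    by (auto simp: rad_dim_def split: if_splits)
qed

lemma pmap_radJ: "pmap (radJ n Z :: 'k::field rep) i j x y =
   (if i \<le> j \<and> x < rad_dim j \<and> y < rad_dim i \<and> rad_start j + x = rad_start i + y then 1 else 0)"
proof (induction j arbitrary: x y)
  case (Suc j)
  show ?case
  proof (cases "i \<le> j")
    case True
    define t where "t = rad_start (Suc j) + x - rad_start j"
    have "pmap (radJ n Z :: 'k rep) i (Suc j) x y =
        (\<Sum>s<rad_dim j. arr (radJ n Z :: 'k rep) j x s * pmap (radJ n Z :: 'k rep) i j s y)"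
      using True by (simp add: mmul_def dimv_radJ)
    also have "\<dots> = (if t < rad_dim j then
        arr (radJ n Z :: 'k rep) j x t * pmap (radJ n Z :: 'k rep) i j t y else 0)"
      unfolding t_def by (rule sum_lessThan_eq_single) (auto simp: arr_radJ)
    also have "\<dots> = (if x < rad_dim (Suc j) \<and> y < rad_dim i \<and> rad_start (Suc j) + x = rad_start i + y
        then 1 else 0)"
    proof (cases "x < rad_dim (Suc j) \<and> y < rad_dim i \<and> rad_start (Suc j) + x = rad_start i + y")
      case xy: True
      then have "Suc j < n" "rad_start i + y < i"
        using rad_basis_index[of x "Suc j"] rad_basis_index[of y i] unfolding rad_basis_iff by auto
      then have "t < rad_dim j" "rad_start j + t = rad_start (Suc j) + x"
        using rad_start_mono[of j "Suc j"] xy True unfolding t_def rad_dim_def by auto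
      with xy True show ?thesis unfolding arr_radJ Suc.IH by simp
    qed (auto simp: t_def arr_radJ Suc.IH)
    finally show ?thesis using True by simp
  qed (auto simp: idm_def dimv_radJ)
qed (auto simp: idm_def dimv_radJ)

section \<open>Extensions of the radical by itself\<close>

text \<open>For a family \<open>\<phi>\<^sub>a : J\<^sub>a \<rightarrow> J\<^sub>a\<^sub>+\<^sub>1\<close>, \<open>path_coord \<phi> a p q\<close> is the coefficient of the
  path \<open>p \<rightarrow> a+1\<close> in the image of the path \<open>q \<rightarrow> a\<close>.\<close>

definition path_coord :: "(nat \<Rightarrow> nat \<Rightarrow> nat \<Rightarrow> 'k::field) \<Rightarrow> nat \<Rightarrow> nat \<Rightarrow> nat \<Rightarrow> 'k" where
  "path_coord \<phi> a p q = (if rad_basis (Suc a) p \<and> rad_basis a q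
     then \<phi> a (p - rad_start (Suc a)) (q - rad_start a) else 0)"

lemma path_coord_eqI:
  fixes \<phi> \<psi> :: "nat \<Rightarrow> nat \<Rightarrow> nat \<Rightarrow> 'k::field"
  assumes "\<forall>a. bmat (rad_dim (Suc a)) (rad_dim a) (\<phi> a)" "\<forall>a. bmat (rad_dim (Suc a)) (rad_dim a) (\<psi> a)"
    and "\<And>a p q. rad_basis (Suc a) p \<Longrightarrow> rad_basis a q \<Longrightarrow> path_coord \<phi> a p q = path_coord \<psi> a p q"
  shows "\<phi> = \<psi>"
proof (intro ext)
  fix a x y
  show "\<phi> a x y = \<psi> a x y"
  proof (cases "x < rad_dim (Suc a) \<and> y < rad_dim a")
    case True
    then have "rad_basis (Suc a) (rad_start (Suc a) + x)" "rad_basis a (rad_start a + y)"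
      using rad_basis_index by auto
    with assms(3)[OF this] show ?thesis unfolding path_coord_def by simp
  qed (use assms(1,2) in \<open>auto simp: bmat_def\<close>)
qed

lemma rad_matrix_eq_zero_iff:
  "(\<lambda>x y. if x < rad_dim j \<and> y < rad_dim i then c (rad_start j + x) (rad_start i + y) else 0) = (\<lambda>_ _. 0)
     \<longleftrightarrow> (\<forall>p q. rad_basis j p \<longrightarrow> rad_basis i q \<longrightarrow> c p q = (0::'k::zero))"
proof
  assume h: "(\<lambda>x y. if x < rad_dim j \<and> y < rad_dim i then c (rad_start j + x) (rad_start i + y) else 0)
    = (\<lambda>_ _. 0)"
  have "c (rad_start j + x) (rad_start i + y) = 0" if "x < rad_dim j" "y < rad_dim i" for x y
    using fun_cong[OF fun_cong[OF h, of x], of y] that by simp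
  then show "\<forall>p q. rad_basis j p \<longrightarrow> rad_basis i q \<longrightarrow> c p q = 0"
    using rad_basis_offset by metis
qed (auto simp: fun_eq_iff dest: rad_basis_index)

lemma cocycle_summand_entry:
  assumes "i \<le> a" "a < j"
  shows "mmul (rad_dim (Suc a)) (pmap (radJ n Z :: 'k::field rep) (Suc a) j)
      (mmul (rad_dim a) (\<phi> a) (pmap (radJ n Z :: 'k rep) i a)) x y =
    (if x < rad_dim j \<and> y < rad_dim i then path_coord \<phi> a (rad_start j + x) (rad_start i + y) else 0)"
proof -
  define s where "s = rad_start j + x - rad_start (Suc a)"
  define t where "t = rad_start i + y - rad_start a"
  have inner: "mmul (rad_dim a) (\<phi> a) (pmap (radJ n Z :: 'k rep) i a) s' y =
      (if y < rad_dim i \<and> rad_basis a (rad_start i + y) then \<phi> a s' t else 0)" for s'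
  proof -
    have "mmul (rad_dim a) (\<phi> a) (pmap (radJ n Z :: 'k rep) i a) s' y =
        (if t < rad_dim a then \<phi> a s' t * pmap (radJ n Z :: 'k rep) i a t y else 0)"
      unfolding mmul_def t_def by (rule sum_lessThan_eq_single) (auto simp: pmap_radJ)
    then show ?thesis using assms unfolding t_def pmap_radJ rad_basis_iff rad_dim_def by auto
  qed
  have outer: "mmul (rad_dim (Suc a)) (pmap (radJ n Z :: 'k::field rep) (Suc a) j) F x y =
      (if x < rad_dim j \<and> rad_basis (Suc a) (rad_start j + x) then F s y else 0)" for F
  proof -
    have "mmul (rad_dim (Suc a)) (pmap (radJ n Z :: 'k::field rep) (Suc a) j) F x y =
        (if s < rad_dim (Suc a) then pmap (radJ n Z :: 'k rep) (Suc a) j x s * F s y else 0)"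
      unfolding mmul_def s_def by (rule sum_lessThan_eq_single) (auto simp: pmap_radJ)
    then show ?thesis using assms unfolding s_def pmap_radJ rad_basis_iff rad_dim_def by auto
  qed
  show ?thesis unfolding outer inner path_coord_def s_def t_def by auto
qed

lemma mem_ext_cocycles_iff:
  "\<phi> \<in> ext_cocycles n Z (radJ n Z :: 'k::field rep) (radJ n Z) \<longleftrightarrow>
    (\<forall>a. bmat (rad_dim (Suc a)) (rad_dim a) (\<phi> a)) \<and>
    (\<forall>i j p q. (i,j) \<in> Z \<longrightarrow> rad_basis j p \<longrightarrow> rad_basis i q \<longrightarrow> (\<Sum>a\<in>{i..<j}. path_coord \<phi> a p q) = 0)"
proof -
  have sum_eq: "(\<Sum>a\<in>{i..<j}. mmul (rad_dim (Suc a)) (pmap (radJ n Z :: 'k rep) (Suc a) j)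
        (mmul (rad_dim a) (\<phi> a) (pmap (radJ n Z :: 'k rep) i a))) =
      (\<lambda>x y. if x < rad_dim j \<and> y < rad_dim i
        then (\<Sum>a\<in>{i..<j}. path_coord \<phi> a (rad_start j + x) (rad_start i + y)) else 0)" for i j
    by (auto simp: fun_eq_iff sum_apply cocycle_summand_entry intro!: sum.neutral)
  have "(\<Sum>a\<in>{i..<j}. mmul (rad_dim (Suc a)) (pmap (radJ n Z :: 'k rep) (Suc a) j)
        (mmul (rad_dim a) (\<phi> a) (pmap (radJ n Z :: 'k rep) i a))) = (\<lambda>_ _. 0) \<longleftrightarrow>
      (\<forall>p q. rad_basis j p \<longrightarrow> rad_basis i q \<longrightarrow> (\<Sum>a\<in>{i..<j}. path_coord \<phi> a p q) = 0)" for i j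
    unfolding sum_eq using rad_matrix_eq_zero_iff[of j i "\<lambda>p q. \<Sum>a\<in>{i..<j}. path_coord \<phi> a p q"] by simp
  then show ?thesis unfolding ext_cocycles_def dimv_radJ by auto
qed

definition cobound :: "(nat \<Rightarrow> nat \<Rightarrow> nat \<Rightarrow> 'k::field) \<Rightarrow> nat \<Rightarrow> nat \<Rightarrow> nat \<Rightarrow> 'k" where
  "cobound g = (\<lambda>a. mmul (rad_dim a) (arr (radJ n Z) a) (g a)
     - mmul (rad_dim (Suc a)) (g (Suc a)) (arr (radJ n Z) a))"

lemma mem_ext_coboundaries_iff:
  "\<phi> \<in> ext_coboundaries n (radJ n Z :: 'k::field rep) (radJ n Z) \<longleftrightarrow>
    (\<exists>g. (\<forall>j. bmat (rad_dim j) (rad_dim j) (g j)) \<and> \<phi> = cobound g)"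
  unfolding ext_coboundaries_def dimv_radJ cobound_def by simp

lemma bmat_arr_radJ: "bmat (rad_dim (Suc a)) (rad_dim a) (arr (radJ n Z :: 'k::field rep) a)"
  unfolding bmat_def arr_radJ by auto

lemma bmat_cobound:
  fixes g :: "nat \<Rightarrow> nat \<Rightarrow> nat \<Rightarrow> 'k::field"
  assumes "\<forall>j. bmat (rad_dim j) (rad_dim j) (g j)"
  shows "bmat (rad_dim (Suc a)) (rad_dim a) (cobound g a)"
  unfolding cobound_def using assms bmat_arr_radJ by (intro bmat_diff bmat_mmul) auto

definition endo_coord :: "(nat \<Rightarrow> nat \<Rightarrow> nat \<Rightarrow> 'k::field) \<Rightarrow> nat \<Rightarrow> nat \<Rightarrow> nat \<Rightarrow> 'k" where
  "endo_coord g j p q =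
     (if rad_basis j p \<and> rad_basis j q then g j (p - rad_start j) (q - rad_start j) else 0)"

lemma path_coord_cobound:
  fixes g :: "nat \<Rightarrow> nat \<Rightarrow> nat \<Rightarrow> 'k::field"
  shows "path_coord (cobound g) a p q = (if rad_basis (Suc a) p \<and> rad_basis a q
    then endo_coord g a p q - endo_coord g (Suc a) p q else 0)"
proof (cases "rad_basis (Suc a) p \<and> rad_basis a q")
  case True
  then have p: "rad_basis (Suc a) p" and q: "rad_basis a q" by auto
  define x where "x = p - rad_start (Suc a)"
  define y where "y = q - rad_start a"
  have "mmul (rad_dim a) (arr (radJ n Z :: 'k rep) a) (g a) x y =
      (if p - rad_start a < rad_dim a
       then arr (radJ n Z :: 'k rep) a x (p - rad_start a) * g a (p - rad_start a) y else 0)"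
    unfolding mmul_def by (rule sum_lessThan_eq_single) (use rad_basis_offset[OF p] in \<open>auto simp: x_def arr_radJ\<close>)
  also have "\<dots> = endo_coord g a p q"
    using p q unfolding x_def y_def arr_radJ endo_coord_def rad_basis_iff rad_dim_def by auto
  finally have A: "mmul (rad_dim a) (arr (radJ n Z :: 'k rep) a) (g a) x y = endo_coord g a p q" .
  have "mmul (rad_dim (Suc a)) (g (Suc a)) (arr (radJ n Z :: 'k rep) a) x y =
      (if q - rad_start (Suc a) < rad_dim (Suc a)
       then g (Suc a) x (q - rad_start (Suc a)) * arr (radJ n Z :: 'k rep) a (q - rad_start (Suc a)) y else 0)"
    unfolding mmul_def by (rule sum_lessThan_eq_single) (use rad_basis_offset[OF q] in \<open>auto simp: y_def arr_radJ\<close>)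
  also have "\<dots> = endo_coord g (Suc a) p q"
    using p q unfolding x_def y_def arr_radJ endo_coord_def rad_basis_iff rad_dim_def by auto
  finally have B:
    "mmul (rad_dim (Suc a)) (g (Suc a)) (arr (radJ n Z :: 'k rep) a) x y = endo_coord g (Suc a) p q" .
  show ?thesis using A B True unfolding path_coord_def cobound_def x_def y_def by simp
qed (auto simp: path_coord_def)

lemma ext_coboundaries_subset_cocycles:
  "ext_coboundaries n (radJ n Z :: 'k::field rep) (radJ n Z) \<subseteq> ext_cocycles n Z (radJ n Z) (radJ n Z)"
proof
  fix \<phi> :: "nat \<Rightarrow> nat \<Rightarrow> nat \<Rightarrow> 'k"
  assume "\<phi> \<in> ext_coboundaries n (radJ n Z) (radJ n Z)"
  then obtain g where g: "\<forall>j. bmat (rad_dim j) (rad_dim j) (g j)" and \<phi>: "\<phi> = cobound g"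
    using mem_ext_coboundaries_iff by blast
  have "(\<Sum>a\<in>{i..<j}. path_coord \<phi> a p q) = 0"
    if ij: "(i,j) \<in> Z" and p: "rad_basis j p" and q: "rad_basis i q" for i j p q
  proof -
    have "i < p"
      using p Z_closed[OF ij, of p j] Z_bounds[OF ij] mem_Z_iff[of p j] unfolding rad_basis_def
      by (cases "p \<le> i") auto
    moreover have "proj_end q \<le> j"
      using q Z_closed[OF ij, of q j] Z_bounds[OF ij] mem_Z_iff[of q j] unfolding rad_basis_def by auto
    ultimately have endo: "endo_coord g a p q =
        (if p < a \<and> a < proj_end q then g a (p - rad_start a) (q - rad_start a) else 0)"
      if "i \<le> a" "a \<le> j" for a
      using that p q unfolding endo_coord_def rad_basis_def by auto
    have "path_coord \<phi> a p q = endo_coord g a p q - endo_coord g (Suc a) p q" if "a \<in> {i..<j}" for a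
      using that p q endo[of a] endo[of "Suc a"] unfolding \<phi> path_coord_cobound rad_basis_def by auto
    then have "(\<Sum>a\<in>{i..<j}. path_coord \<phi> a p q) =
        (\<Sum>a\<in>{i..<j}. endo_coord g a p q - endo_coord g (Suc a) p q)"
      by (rule sum.cong[OF refl])
    also have "\<dots> = endo_coord g i p q - endo_coord g j p q"
      using Z_bounds[OF ij] by (intro sum_atLeastLessThan_telescope) simp
    also have "\<dots> = 0"
      using endo[of i] endo[of j] \<open>i < p\<close> \<open>proj_end q \<le> j\<close> Z_bounds[OF ij] by simp
    finally show ?thesis .
  qed
  then show "\<phi> \<in> ext_cocycles n Z (radJ n Z) (radJ n Z)"
    unfolding mem_ext_cocycles_iff using bmat_cobound[OF g] \<phi> by auto
qed

text \<open>A pair \<open>(p, q)\<close> with \<open>ext_pair p q\<close> indexes the extension class whose cocycle sends the path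
  \<open>q \<rightarrow> p\<close> to the arrow \<open>p \<rightarrow> p+1\<close>; these classes form a basis of \<open>Ext\<^sup>1(J, J)\<close>.\<close>

definition ext_pair :: "nat \<Rightarrow> nat \<Rightarrow> bool" where
  "ext_pair p q \<longleftrightarrow> q < p \<and> p < proj_end q \<and> proj_end q < proj_end p \<and> proj_end p \<le> proj_end (Suc q)"

definition ext_unit :: "nat \<Rightarrow> nat \<Rightarrow> nat \<Rightarrow> nat \<Rightarrow> nat \<Rightarrow> 'k::field" where
  "ext_unit p q = (\<lambda>a x y. if a = p \<and> x = p - rad_start (Suc p) \<and> y = q - rad_start p then 1 else 0)"

lemma ext_pair_rad_basis: "ext_pair p q \<Longrightarrow> rad_basis (Suc p) p \<and> rad_basis p q"
  unfolding ext_pair_def rad_basis_def by auto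

lemma path_coord_ext_unit:
  assumes "ext_pair p q"
  shows "path_coord (ext_unit p q :: nat \<Rightarrow> nat \<Rightarrow> nat \<Rightarrow> 'k::field) a p' q' =
    (if a = p \<and> p' = p \<and> q' = q then 1 else 0)"
proof -
  have "rad_basis (Suc p) p" "rad_basis p q" using ext_pair_rad_basis[OF assms] by auto
  then show ?thesis unfolding path_coord_def ext_unit_def rad_basis_iff by auto
qed

lemma bmat_ext_unit:
  "ext_pair p q \<Longrightarrow> bmat (rad_dim (Suc a)) (rad_dim a) ((ext_unit p q :: nat \<Rightarrow> nat \<Rightarrow> nat \<Rightarrow> 'k::field) a)"
  using rad_basis_offset[of "Suc p" p] rad_basis_offset[of p q] ext_pair_rad_basis
  unfolding bmat_def ext_unit_def by auto

lemma ext_unit_cocycle: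
  assumes pq: "ext_pair p q"
  shows "(ext_unit p q :: nat \<Rightarrow> nat \<Rightarrow> nat \<Rightarrow> 'k::field) \<in> ext_cocycles n Z (radJ n Z) (radJ n Z)"
proof -
  have "(\<Sum>a\<in>{i..<j}. path_coord (ext_unit p q :: nat \<Rightarrow> nat \<Rightarrow> nat \<Rightarrow> 'k) a p' q') = 0"
    if ij: "(i,j) \<in> Z" and p': "rad_basis j p'" and q': "rad_basis i q'" for i j p' q'
  proof -
    have "\<not> (i \<le> p \<and> p < j \<and> p' = p \<and> q' = q)"
    proof
      assume h: "i \<le> p \<and> p < j \<and> p' = p \<and> q' = q"
      then have "proj_end (Suc q) \<le> proj_end i"
        using q' proj_end_mono unfolding rad_basis_def by auto
      moreover have "proj_end i \<le> j" "j < proj_end p"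
        using ij mem_Z_iff p' h unfolding rad_basis_def by auto
      ultimately show False using pq unfolding ext_pair_def by auto
    qed
    then show ?thesis unfolding path_coord_ext_unit[OF pq] by (auto intro: sum.neutral)
  qed
  then show ?thesis unfolding mem_ext_cocycles_iff using bmat_ext_unit[OF pq] by auto
qed

lemma path_coord_add: "path_coord (\<phi> + \<psi>) a p q = path_coord \<phi> a p q + (path_coord \<psi> a p q :: 'k::field)"
  unfolding path_coord_def by simp

lemma path_coord_cscale: "path_coord (cscale c \<phi>) a p q = c * (path_coord \<phi> a p q :: 'k::field)"
  unfolding path_coord_def cscale_def by simp

lemma path_coord_support:
  "path_coord \<phi> a p q \<noteq> 0 \<Longrightarrow> p \<le> a \<and> Suc a < proj_end p \<and> q < a \<and> a < proj_end q"
  unfolding path_coord_def rad_basis_def by (auto split: if_splits)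

lemma subspace_ext_cocycles:
  "module.subspace cscale (ext_cocycles n Z (radJ n Z :: 'k::field rep) (radJ n Z))"
proof -
  interpret V: vector_space "cscale :: 'k \<Rightarrow> (nat \<Rightarrow> nat \<Rightarrow> nat \<Rightarrow> 'k) \<Rightarrow> _" by (rule vector_space_cscale)
  show ?thesis unfolding V.subspace_def
  proof (intro conjI ballI allI)
    show "0 \<in> ext_cocycles n Z (radJ n Z :: 'k rep) (radJ n Z)"
      unfolding mem_ext_cocycles_iff by (simp add: path_coord_def bmat_def zero_fun_def)
  next
    fix \<phi> \<psi> assume "\<phi> \<in> ext_cocycles n Z (radJ n Z :: 'k rep) (radJ n Z)"
      "\<psi> \<in> ext_cocycles n Z (radJ n Z :: 'k rep) (radJ n Z)"
    then show "\<phi> + \<psi> \<in> ext_cocycles n Z (radJ n Z :: 'k rep) (radJ n Z)"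
      unfolding mem_ext_cocycles_iff by (simp add: path_coord_add sum.distrib bmat_def)
  next
    fix c and \<phi> :: "nat \<Rightarrow> nat \<Rightarrow> nat \<Rightarrow> 'k"
    assume "\<phi> \<in> ext_cocycles n Z (radJ n Z :: 'k rep) (radJ n Z)"
    then show "cscale c \<phi> \<in> ext_cocycles n Z (radJ n Z :: 'k rep) (radJ n Z)"
      unfolding mem_ext_cocycles_iff path_coord_cscale
      by (simp add: sum_distrib_left[symmetric] bmat_def cscale_def)
  qed
qed

definition class_coord :: "(nat \<Rightarrow> nat \<Rightarrow> nat \<Rightarrow> 'k::field) \<Rightarrow> nat \<Rightarrow> nat \<Rightarrow> 'k" where
  "class_coord \<phi> p q = (\<Sum>a<n. path_coord \<phi> a p q)"

lemma linear_class_coord: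
  "Vector_Spaces.linear cscale (*) (\<lambda>\<phi>. class_coord (\<phi> :: _ \<Rightarrow> _ \<Rightarrow> _ \<Rightarrow> 'k::field) p q)"
  unfolding linear_iff class_coord_def
  by (simp add: vector_space_cscale vector_space_mult path_coord_add path_coord_cscale
      sum.distrib sum_distrib_left)

lemma ext_pair_less: "ext_pair p q \<Longrightarrow> q < p \<and> p < n"
  unfolding ext_pair_def using proj_end_le[of q] by auto

lemma finite_ext_pairs: "finite {(p,q). ext_pair p q}"
  by (rule finite_subset[of _ "{..<n} \<times> {..<n}"]) (auto dest: ext_pair_less)

lemma class_coord_ext_unit:
  assumes "ext_pair p q" "ext_pair p' q'"
  shows "class_coord (ext_unit p' q' :: nat \<Rightarrow> nat \<Rightarrow> nat \<Rightarrow> 'k::field) p q =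
    (if p = p' \<and> q = q' then 1 else 0)"
  unfolding class_coord_def path_coord_ext_unit[OF assms(2)]
  using ext_pair_less[OF assms(2)] by (cases "p = p' \<and> q = q'") (auto simp: sum.delta intro!: sum.neutral)

lemma class_coord_cobound:
  fixes g :: "nat \<Rightarrow> nat \<Rightarrow> nat \<Rightarrow> 'k::field"
  assumes pq: "ext_pair p q"
  shows "class_coord (cobound g) p q = 0"
proof -
  have pq': "q < p" "p < proj_end q" "proj_end q < proj_end p" "proj_end q \<le> n"
    using pq proj_end_le unfolding ext_pair_def by auto
  then have range: "rad_basis (Suc a) p \<and> rad_basis a q \<longleftrightarrow> a \<in> {p..<proj_end q}" for a
    unfolding rad_basis_def by auto
  have "class_coord (cobound g) p q = (\<Sum>a\<in>{p..<proj_end q}. path_coord (cobound g) a p q)"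
    unfolding class_coord_def using pq'
    by (intro sum.mono_neutral_right) (auto simp: path_coord_cobound range)
  also have "\<dots> = (\<Sum>a\<in>{p..<proj_end q}. endo_coord g a p q - endo_coord g (Suc a) p q)"
    by (intro sum.cong) (simp_all add: path_coord_cobound range)
  also have "\<dots> = endo_coord g p p q - endo_coord g (proj_end q) p q"
    using pq' by (intro sum_atLeastLessThan_telescope) simp
  also have "\<dots> = 0" unfolding endo_coord_def rad_basis_def by simp
  finally show ?thesis .
qed

lemma linear_cobound: "Vector_Spaces.linear cscale cscale (cobound :: _ \<Rightarrow> _ \<Rightarrow> _ \<Rightarrow> _ \<Rightarrow> 'k::field)"
  unfolding linear_iff
  by (simp add: vector_space_cscale fun_eq_iff cobound_def mmul_def cscale_def sum.distrib
      sum_distrib_left algebra_simps)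

lemma ext_coboundaries_finite_span:
  "\<exists>W. finite W \<and> ext_coboundaries n (radJ n Z :: 'k::field rep) (radJ n Z) \<subseteq> module.span cscale W"
proof -
  interpret V: vector_space "cscale :: 'k \<Rightarrow> (nat \<Rightarrow> nat \<Rightarrow> nat \<Rightarrow> 'k) \<Rightarrow> _" by (rule vector_space_cscale)
  interpret cb: module_hom cscale cscale "cobound :: _ \<Rightarrow> _ \<Rightarrow> _ \<Rightarrow> _ \<Rightarrow> 'k"
    using linear_cobound by (simp add: module_hom_iff_linear)
  define U where "U = {(j,x,y). j < n \<and> x < rad_dim j \<and> y < rad_dim j}"
  define unit where "unit u = (\<lambda>(j::nat) (x::nat) (y::nat). if (j,x,y) = u then 1 else (0::'k))" for u
  have "finite U"
    by (rule finite_subset[of _ "{..<n} \<times> {..<n} \<times> {..<n}"]) (auto simp: U_def rad_dim_def)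
  have span: "cobound g \<in> V.span ((\<lambda>u. cobound (unit u)) ` U)"
    if g: "\<forall>j. bmat (rad_dim j) (rad_dim j) (g j)" for g
  proof -
    have "g j x y = (if (j,x,y) \<in> U then g j x y else 0)" for j x y
      using g unfolding U_def bmat_def by (cases "j < n") (auto simp: rad_dim_def)
    moreover have "(\<Sum>u\<in>U. cscale (case u of (j,x,y) \<Rightarrow> g j x y) (unit u)) j x y =
        (\<Sum>u\<in>U. if u = (j,x,y) then g j x y else 0)" for j x y
      unfolding sum_apply cscale_def unit_def by (intro sum.cong) auto
    ultimately have "g = (\<Sum>u\<in>U. cscale (case u of (j,x,y) \<Rightarrow> g j x y) (unit u))"
      using \<open>finite U\<close> by (simp add: fun_eq_iff)
    then have "cobound g = (\<Sum>u\<in>U. cscale (case u of (j,x,y) \<Rightarrow> g j x y) (cobound (unit u)))"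
      by (metis (no_types, lifting) cb.scale cb.sum sum.cong)
    also have "\<dots> \<in> V.span ((\<lambda>u. cobound (unit u)) ` U)"
      by (intro V.span_sum V.span_scale V.span_base) auto
    finally show ?thesis .
  qed
  show ?thesis
  proof (intro exI conjI)
    show "finite ((\<lambda>u. cobound (unit u)) ` U)" using \<open>finite U\<close> by simp
    show "ext_coboundaries n (radJ n Z :: 'k rep) (radJ n Z) \<subseteq> V.span ((\<lambda>u. cobound (unit u)) ` U)"
    proof
      fix \<phi> :: "nat \<Rightarrow> nat \<Rightarrow> nat \<Rightarrow> 'k"
      assume "\<phi> \<in> ext_coboundaries n (radJ n Z) (radJ n Z)"
      then obtain g where "\<forall>j. bmat (rad_dim j) (rad_dim j) (g j)" "\<phi> = cobound g"
        unfolding mem_ext_coboundaries_iff by blast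
      then show "\<phi> \<in> V.span ((\<lambda>u. cobound (unit u)) ` U)" using span by simp
    qed
  qed
qed

lemma class_coord_eq_0_of_cocycle:
  fixes \<psi> :: "nat \<Rightarrow> nat \<Rightarrow> nat \<Rightarrow> 'k::field"
  assumes \<psi>: "\<psi> \<in> ext_cocycles n Z (radJ n Z) (radJ n Z)"
    and pairs: "\<And>p q. ext_pair p q \<Longrightarrow> class_coord \<psi> p q = 0"
    and qp: "q < p" "proj_end q < proj_end p"
  shows "class_coord \<psi> p q = 0"
proof (cases "ext_pair p q")
  case not_pair: False
  show ?thesis
  proof (cases "proj_end q \<le> p")
    case True
    then have "path_coord \<psi> a p q = 0" for a using path_coord_support[of \<psi> a p q] by fastforce
    then show ?thesis unfolding class_coord_def by simp
  next
    case False
    with not_pair qp have "proj_end (Suc q) < proj_end p" unfolding ext_pair_def by auto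
    define j where "j = max (proj_end (Suc q)) (proj_end q)"
    have "j < n" using \<open>proj_end (Suc q) < proj_end p\<close> qp proj_end_le[of p] unfolding j_def by auto
    then have "(Suc q, j) \<in> Z" unfolding mem_Z_iff j_def by auto
    moreover have "rad_basis j p" "rad_basis (Suc q) q"
      using False qp \<open>proj_end (Suc q) < proj_end p\<close> unfolding rad_basis_def j_def by auto
    ultimately have "(\<Sum>a\<in>{Suc q..<j}. path_coord \<psi> a p q) = 0"
      using \<psi> unfolding mem_ext_cocycles_iff by blast
    moreover have "class_coord \<psi> p q = (\<Sum>a\<in>{Suc q..<j}. path_coord \<psi> a p q)"
      unfolding class_coord_def using \<open>j < n\<close> path_coord_support[of \<psi> _ p q]
      by (intro sum.mono_neutral_right) (force simp: j_def)+
    ultimately show ?thesis by simp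
  qed
qed (rule pairs)

text \<open>A primitive of \<open>a \<mapsto> path_coord \<psi> a p q\<close>, normalised so that it vanishes wherever the
  corresponding coordinate of an endomorphism family of \<open>J\<close> must vanish.\<close>

definition potential :: "(nat \<Rightarrow> nat \<Rightarrow> nat \<Rightarrow> 'k::field) \<Rightarrow> nat \<Rightarrow> nat \<Rightarrow> nat \<Rightarrow> 'k" where
  "potential \<psi> p q j =
     (if p \<le> q then (\<Sum>b\<in>{j..<n}. path_coord \<psi> b p q) else - (\<Sum>b<j. path_coord \<psi> b p q))"

lemma potential_diff: "a < n \<Longrightarrow> potential \<psi> p q a - potential \<psi> p q (Suc a) = path_coord \<psi> a p q"
  unfolding potential_def by (simp add: sum.atLeast_Suc_lessThan)

lemma potential_source_eq_0:
  assumes "rad_basis (Suc a) p" "rad_basis a q" "\<not> p < a"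
  shows "potential \<psi> p q a = 0"
  using assms path_coord_support[of \<psi> _ p q] unfolding potential_def rad_basis_def
  by (force intro: sum.neutral)

lemma potential_target_eq_0:
  fixes \<psi> :: "nat \<Rightarrow> nat \<Rightarrow> nat \<Rightarrow> 'k::field"
  assumes zero: "\<And>p q. q < p \<Longrightarrow> proj_end q < proj_end p \<Longrightarrow> class_coord \<psi> p q = 0"
    and p: "rad_basis (Suc a) p" and q: "rad_basis a q" and "\<not> Suc a < proj_end q"
  shows "potential \<psi> p q (Suc a) = 0"
proof -
  have rq: "proj_end q = Suc a" "Suc a < proj_end p" "Suc a \<le> n"
    using assms(4) p q proj_end_le[of p] unfolding rad_basis_def by auto
  then have "(\<Sum>b\<in>{Suc a..<n}. path_coord \<psi> b p q) = 0"
    using path_coord_support[of \<psi> _ p q] by (force intro: sum.neutral)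
  moreover have "(\<Sum>b<Suc a. path_coord \<psi> b p q) = 0" if "q < p"
  proof -
    have "(\<Sum>b<Suc a. path_coord \<psi> b p q) = class_coord \<psi> p q"
      unfolding class_coord_def using rq path_coord_support[of \<psi> _ p q]
      by (intro sum.mono_neutral_left) force+
    also have "\<dots> = 0" using zero[OF that] rq by simp
    finally show ?thesis .
  qed
  ultimately show ?thesis unfolding potential_def by simp
qed

lemma mem_ext_coboundariesI:
  fixes \<psi> :: "nat \<Rightarrow> nat \<Rightarrow> nat \<Rightarrow> 'k::field"
  assumes bounded: "\<forall>a. bmat (rad_dim (Suc a)) (rad_dim a) (\<psi> a)"
    and zero: "\<And>p q. q < p \<Longrightarrow> proj_end q < proj_end p \<Longrightarrow> class_coord \<psi> p q = 0"
  shows "\<psi> \<in> ext_coboundaries n (radJ n Z) (radJ n Z)"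
proof -
  define g where "g j x y =
    (if x < rad_dim j \<and> y < rad_dim j then potential \<psi> (rad_start j + x) (rad_start j + y) j else 0)"
    for j x y
  have g: "\<forall>j. bmat (rad_dim j) (rad_dim j) (g j)" unfolding g_def bmat_def by auto
  have endo: "endo_coord g j p q = (if rad_basis j p \<and> rad_basis j q then potential \<psi> p q j else 0)"
    for j p q
    unfolding endo_coord_def g_def using rad_basis_offset[of j p] rad_basis_offset[of j q] by auto
  have "\<psi> = cobound g"
  proof (rule path_coord_eqI[OF bounded])
    show "\<forall>a. bmat (rad_dim (Suc a)) (rad_dim a) (cobound g a)" using bmat_cobound[OF g] by blast
    fix a p q assume p: "rad_basis (Suc a) p" and q: "rad_basis a q"
    have "endo_coord g a p q = potential \<psi> p q a"
      using potential_source_eq_0[OF p q] p q unfolding endo rad_basis_def by auto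
    moreover have "endo_coord g (Suc a) p q = potential \<psi> p q (Suc a)"
      using potential_target_eq_0[OF zero p q] p q unfolding endo rad_basis_def by auto
    ultimately have "path_coord (cobound g) a p q = potential \<psi> p q a - potential \<psi> p q (Suc a)"
      using p q unfolding path_coord_cobound by simp
    moreover have "a < n" using q unfolding rad_basis_iff by simp
    ultimately show "path_coord \<psi> a p q = path_coord (cobound g) a p q"
      using potential_diff[of a \<psi> p q] by simp
  qed
  with g show ?thesis unfolding mem_ext_coboundaries_iff by blast
qed

definition ext_unit_expansion :: "(nat \<Rightarrow> nat \<Rightarrow> nat \<Rightarrow> 'k::field) \<Rightarrow> nat \<Rightarrow> nat \<Rightarrow> nat \<Rightarrow> 'k" where
  "ext_unit_expansion \<phi> = (\<Sum>(p,q)\<in>{(p,q). ext_pair p q}. cscale (class_coord \<phi> p q) (ext_unit p q))"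

lemma class_coord_ext_unit_expansion:
  fixes \<phi> :: "nat \<Rightarrow> nat \<Rightarrow> nat \<Rightarrow> 'k::field"
  assumes "ext_pair p q"
  shows "class_coord (ext_unit_expansion \<phi>) p q = class_coord \<phi> p q"
proof -
  interpret c: module_hom cscale "(*)" "\<lambda>\<phi>. class_coord (\<phi> :: _ \<Rightarrow> _ \<Rightarrow> _ \<Rightarrow> 'k) p q"
    using linear_class_coord by (simp add: module_hom_iff_linear)
  have "class_coord (ext_unit_expansion \<phi>) p q =
      (\<Sum>pq\<in>{(p,q). ext_pair p q}. if pq = (p,q) then class_coord \<phi> p q else 0)"
    unfolding ext_unit_expansion_def c.sum
    by (intro sum.cong) (auto simp: c.scale class_coord_ext_unit assms split: if_split_asm)
  also have "\<dots> = class_coord \<phi> p q" using finite_ext_pairs assms by simp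
  finally show ?thesis .
qed

lemma ext_unit_expansion_mem_span:
  "ext_unit_expansion \<phi> \<in> module.span cscale ((\<lambda>(p,q). ext_unit p q) ` {(p,q). ext_pair p q})"
proof -
  interpret V: vector_space "cscale :: 'k \<Rightarrow> (nat \<Rightarrow> nat \<Rightarrow> nat \<Rightarrow> 'k::field) \<Rightarrow> _"
    by (rule vector_space_cscale)
  show ?thesis unfolding ext_unit_expansion_def
    by (intro V.span_sum) (auto intro: V.span_scale V.span_base)
qed

lemma cocycle_decomposition:
  fixes \<phi> :: "nat \<Rightarrow> nat \<Rightarrow> nat \<Rightarrow> 'k::field"
  assumes \<phi>: "\<phi> \<in> ext_cocycles n Z (radJ n Z) (radJ n Z)"
  shows "\<phi> - ext_unit_expansion \<phi> \<in> ext_coboundaries n (radJ n Z) (radJ n Z)"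
proof -
  interpret V: vector_space "cscale :: 'k \<Rightarrow> (nat \<Rightarrow> nat \<Rightarrow> nat \<Rightarrow> 'k) \<Rightarrow> _" by (rule vector_space_cscale)
  interpret c: module_hom cscale "(*)" "\<lambda>\<phi>. class_coord (\<phi> :: _ \<Rightarrow> _ \<Rightarrow> _ \<Rightarrow> 'k) p q" for p q
    using linear_class_coord by (simp add: module_hom_iff_linear)
  have "ext_unit_expansion \<phi> \<in> ext_cocycles n Z (radJ n Z) (radJ n Z)"
    unfolding ext_unit_expansion_def
    by (intro V.subspace_sum[OF subspace_ext_cocycles])
      (auto intro!: V.subspace_scale[OF subspace_ext_cocycles] ext_unit_cocycle)
  then have cocycle: "\<phi> - ext_unit_expansion \<phi> \<in> ext_cocycles n Z (radJ n Z) (radJ n Z)"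
    using V.subspace_diff[OF subspace_ext_cocycles \<phi>] by blast
  have "class_coord (\<phi> - ext_unit_expansion \<phi>) p q = 0" if "ext_pair p q" for p q
    unfolding c.diff using class_coord_ext_unit_expansion[OF that, of \<phi>] by simp
  then have "class_coord (\<phi> - ext_unit_expansion \<phi>) p q = 0"
    if "q < p" "proj_end q < proj_end p" for p q
    using class_coord_eq_0_of_cocycle[OF cocycle _ that] by blast
  moreover have "\<forall>a. bmat (rad_dim (Suc a)) (rad_dim a) ((\<phi> - ext_unit_expansion \<phi>) a)"
    using cocycle unfolding mem_ext_cocycles_iff by blast
  ultimately show ?thesis by (intro mem_ext_coboundariesI) auto
qed

theorem dim_Ext1_radJ: "dim_Ext1 n Z (radJ n Z :: 'k::field rep) (radJ n Z) = card {(p,q). ext_pair p q}"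
proof -
  interpret V: vector_space "cscale :: 'k \<Rightarrow> (nat \<Rightarrow> nat \<Rightarrow> nat \<Rightarrow> 'k) \<Rightarrow> _" by (rule vector_space_cscale)
  let ?C = "ext_cocycles n Z (radJ n Z :: 'k rep) (radJ n Z)"
  let ?B = "ext_coboundaries n (radJ n Z :: 'k rep) (radJ n Z)"
  let ?I = "{(p,q). ext_pair p q}"
  let ?e = "\<lambda>(p,q). ext_unit p q :: nat \<Rightarrow> nat \<Rightarrow> nat \<Rightarrow> 'k"
  obtain W where W: "finite W" "?B \<subseteq> V.span W" using ext_coboundaries_finite_span by blast
  have "?C \<subseteq> V.span (?B \<union> ?e ` ?I)"
  proof
    fix \<phi> assume "\<phi> \<in> ?C"
    then have "\<phi> - ext_unit_expansion \<phi> \<in> V.span (?B \<union> ?e ` ?I)"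
      using cocycle_decomposition by (auto intro: V.span_base)
    moreover have "ext_unit_expansion \<phi> \<in> V.span (?B \<union> ?e ` ?I)"
      using ext_unit_expansion_mem_span V.span_mono[of "?e ` ?I"] by blast
    ultimately show "\<phi> \<in> V.span (?B \<union> ?e ` ?I)" using V.span_add by fastforce
  qed
  moreover have "?B \<union> ?e ` ?I \<subseteq> ?C"
    using ext_coboundaries_subset_cocycles ext_unit_cocycle by auto
  ultimately have "V.dim ?C = V.dim ?B + card ?I"
    using W finite_ext_pairs
    by (intro V.dim_eq_dim_add_card_dual_family[where c = "\<lambda>(p,q) \<phi>. class_coord \<phi> p q"])
      (auto simp: linear_class_coord class_coord_ext_unit mem_ext_coboundaries_iff class_coord_cobound
        split: if_split_asm)
  then show ?thesis unfolding dim_Ext1_def by simp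
qed

section \<open>Injective interval representations\<close>

lemma is_rep_interval_rep:
  assumes "b \<le> n" and "a < b \<Longrightarrow> b \<le> proj_end a"
  shows "is_rep n Z (interval_rep a b :: 'k::field rep)"
  unfolding is_rep_def
proof (intro conjI allI impI)
  show "n \<le> j \<Longrightarrow> dimv (interval_rep a b :: 'k rep) j = 0" for j
    using assms by (simp add: dimv_interval_rep)
  show "bmat (dimv (interval_rep a b :: 'k rep) (Suc k)) (dimv (interval_rep a b :: 'k rep) k)
      (arr (interval_rep a b) k)" for k
    unfolding bmat_def dimv_interval_rep arr_interval_rep by auto
  fix i j assume "(i,j) \<in> Z"
  then have "\<not> (i \<le> j \<and> a \<le> i \<and> j < b)"
    using assms(2) proj_end_mono[of a i] unfolding mem_Z_iff by auto
  then show "pmap (interval_rep a b :: 'k rep) i j = (\<lambda>_ _. 0)" by (auto simp: fun_eq_iff pmap_interval_rep)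
qed

lemma eJ_eq_interval_rep:
  assumes "i < n"
  shows "eJ n Z i = (interval_rep (Suc i) (proj_end i) :: 'k::field rep)"
proof -
  let ?B = "{(i',j). i' = i \<and> i < j \<and> j < n \<and> (i,j) \<notin> Z}"
  have "pbasis n ?B j = (if i < j \<and> j < proj_end i then [i] else [])" for j
  proof (cases "j < n")
    case True
    then have "(i',j) \<in> ?B \<longleftrightarrow> i' = i \<and> (i < j \<and> j < proj_end i)" for i'
      using mem_Z_iff[of i j] by auto
    with True assms show ?thesis unfolding pbasis_def by (simp add: filter_upt_eq_single)
  qed (use proj_end_le[of i] in \<open>auto simp: pbasis_def\<close>)
  then show ?thesis unfolding eJ_def pathmod_def interval_rep_def by (auto simp: fun_eq_iff)
qed

text \<open>A functional \<open>F\<close> on \<open>Y\<^sub>b\<^sub>-\<^sub>1\<close> is pulled back along the paths ending at \<open>b - 1\<close>; the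
  relation \<open>(l - 1, b - 1) \<in> Z\<close> is what makes this compatible with the arrow entering \<open>[l, b)\<close>.\<close>

lemma is_hom_to_interval_rep:
  fixes F :: "nat \<Rightarrow> nat \<Rightarrow> 'k::field"
  assumes Y: "is_rep n Z Y" and F: "bmat 1 (dimv Y (b - 1)) F"
    and Z: "1 \<le> l \<Longrightarrow> (l - 1, b - 1) \<in> Z"
  shows "is_hom n Y (interval_rep l b)
    (\<lambda>j. if l \<le> j \<and> j < b then mmul (dimv Y (b - 1)) F (pmap Y j (b - 1)) else (\<lambda>_ _. 0))"
    (is "is_hom n Y _ ?h")
  unfolding is_hom_def
proof (intro conjI allI impI)
  have Y': "arrows_bounded Y" using Y by (rule is_rep_arrows_bounded)
  show "bmat (dimv (interval_rep l b :: 'k rep) j) (dimv Y j) (?h j)" for j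
    using bmat_mmul[OF F pmap_bmat[OF Y', of "b - 1" j]] by (auto simp: dimv_interval_rep bmat_zero)
  fix a assume "Suc a < n"
  show "mmul (dimv Y (Suc a)) (?h (Suc a)) (arr Y a) =
      mmul (dimv (interval_rep l b :: 'k rep) a) (arr (interval_rep l b) a) (?h a)"
  proof (cases "l \<le> Suc a \<and> Suc a < b")
    case True
    have "pmap Y a (b - 1) = mmul (dimv Y (Suc a)) (pmap Y (Suc a) (b - 1)) (arr Y a)"
      using True by (intro pmap_Suc_source[OF Y']) arith
    then have "mmul (dimv Y (Suc a)) (?h (Suc a)) (arr Y a) = mmul (dimv Y (b - 1)) F (pmap Y a (b - 1))"
      using True by (simp add: mmul_assoc[symmetric])
    also have "\<dots> = (if l \<le> a then ?h a else (\<lambda>_ _. 0))"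
    proof (cases "l \<le> a")
      case False
      with True have "l = Suc a" by simp
      with Z have "(a, b - 1) \<in> Z" by simp
      then have "pmap Y a (b - 1) = (\<lambda>_ _. 0)" using Y unfolding is_rep_def by blast
      with False show ?thesis by (simp add: mmul_zero_right)
    qed (use True in simp)
    also have "\<dots> = mmul (dimv (interval_rep l b :: 'k rep) a) (arr (interval_rep l b) a) (?h a)"
      using True mmul_idm_left[of 1 "dimv Y a" "?h a"] \<open>bmat _ _ (?h a)\<close>
      by (auto simp: arr_interval_rep_idm dimv_interval_rep mmul_zero_right)
    finally show ?thesis .
  next
    case False
    then have "\<not> (l \<le> a \<and> Suc a < b)" by auto
    with False show ?thesis
      by (auto simp: arr_interval_rep_zero mmul_zero_left mmul_zero_right)
  qed
qed

lemma interval_top_row_factors: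
  assumes \<iota>: "is_hom n X Y \<iota>" and mono: "is_mono X \<iota>" and h: "is_hom n X (interval_rep l b) h"
    and "l \<le> c" "c < b"
  shows "\<exists>F. bmat 1 (dimv Y c) F \<and> mmul (dimv Y c) F (\<iota> c) = (h c :: nat \<Rightarrow> nat \<Rightarrow> 'k::field)"
proof -
  have \<iota>c: "bmat (dimv Y c) (dimv X c) (\<iota> c)" by (rule is_hom_bmat[OF \<iota>])
  have hc: "bmat 1 (dimv X c) (h c)" using is_hom_bmat[OF h, of c] assms(4,5) by (simp add: dimv_interval_rep)
  obtain f where f: "\<forall>y<dimv X c. (\<Sum>s<dimv Y c. f s * \<iota> c s y) = h c 0 y"
    using row_factors_through_injective[OF \<iota>c] mono unfolding is_mono_def by blast
  define F where "F x s = (if x = 0 \<and> s < dimv Y c then f s else 0)" for x s :: nat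
  have "mmul (dimv Y c) F (\<iota> c) x y = h c x y" for x y
    using f hc \<iota>c unfolding mmul_def F_def bmat_def by (cases "x = 0"; cases "y < dimv X c") auto
  moreover have "bmat 1 (dimv Y c) F" unfolding F_def bmat_def by auto
  ultimately show ?thesis by blast
qed

lemma is_injective_interval_rep:
  assumes "1 \<le> b" "b \<le> n"
  shows "is_injective n Z (interval_rep (inj_start b) b :: 'k::field rep)"
proof -
  define l where "l = inj_start b"
  define c where "c = b - 1"
  have lc: "l \<le> c" "c < b" "c < n" using inj_start_less[OF assms] assms unfolding l_def c_def by auto
  have rep: "is_rep n Z (interval_rep l b :: 'k rep)"
    using inj_start_le_iff[OF assms(2), of l] assms(2) unfolding l_def by (intro is_rep_interval_rep) auto
  have Z: "(l - 1, c) \<in> Z" if "1 \<le> l"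
  proof -
    have "\<not> l \<le> l - 1" using that by simp
    then have "proj_end (l - 1) < b" using inj_start_le_iff[OF assms(2), of "l - 1"] unfolding l_def by simp
    then show ?thesis unfolding mem_Z_iff c_def using assms by auto
  qed
  show ?thesis unfolding is_injective_def l_def[symmetric]
  proof (intro conjI allI impI rep)
    fix X Y :: "'k rep" and \<iota> h
    assume "is_rep n Z X" and Y: "is_rep n Z Y" and \<iota>: "is_hom n X Y \<iota>" and mono: "is_mono X \<iota>"
      and h: "is_hom n X (interval_rep l b) h"
    obtain F where F: "bmat 1 (dimv Y c) F" and F\<iota>: "mmul (dimv Y c) F (\<iota> c) = h c"
      using interval_top_row_factors[OF \<iota> mono h lc(1,2)] by blast
    let ?h' = "\<lambda>j. if l \<le> j \<and> j < b then mmul (dimv Y c) F (pmap Y j c) else (\<lambda>_ _. 0)"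
    have "is_hom n Y (interval_rep l b) ?h'"
      using is_hom_to_interval_rep[OF Y] F Z
      unfolding c_def by simp
    moreover have "mmul (dimv Y j) (?h' j) (\<iota> j) = h j" for j
    proof (cases "l \<le> j \<and> j < b")
      case True
      then have "j \<le> c" unfolding c_def by linarith
      have "mmul (dimv Y j) (?h' j) (\<iota> j) = mmul (dimv Y c) F (mmul (dimv X c) (\<iota> c) (pmap X j c))"
        using True is_hom_pmap[OF \<iota> \<open>j \<le> c\<close> lc(3)] by (simp add: mmul_assoc[symmetric])
      also have "\<dots> = mmul (dimv X c) (h c) (pmap X j c)" by (simp add: mmul_assoc F\<iota>)
      also have "\<dots> = mmul 1 (idm 1) (h j)"
        using is_hom_pmap[OF h \<open>j \<le> c\<close> lc(3)] True \<open>j \<le> c\<close> lc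
        by (simp add: pmap_interval_rep_idm dimv_interval_rep)
      also have "\<dots> = h j"
        using is_hom_bmat[OF h, of j] True by (intro mmul_idm_left) (simp add: dimv_interval_rep)
      finally show ?thesis .
    next
      case False
      then have "dimv (interval_rep l b :: 'k rep) j = 0" by (simp add: dimv_interval_rep)
      then have "bmat 0 (dimv X j) (h j)" using is_hom_bmat[OF h, of j] by simp
      then have "h j = (\<lambda>_ _. 0)" by (rule bmat_0_rows)
      with False show ?thesis by (auto simp: mmul_zero_left)
    qed
    ultimately show "\<exists>h'. is_hom n Y (interval_rep l b) h' \<and> (\<forall>j. mmul (dimv Y j) (h' j) (\<iota> j) = h j)"
      by blast
  qed
qed

section \<open>Injective dimension of the summands of the radical\<close>

lemma inj_dim_le1_interval_rep:
  assumes i: "i < n" and eq: "inj_start (proj_end i) = inj_start (Suc i)"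
  shows "inj_dim_le1 n Z (interval_rep (Suc i) (proj_end i) :: 'k::field rep)"
proof -
  define r where "r = proj_end i"
  define L where "L = inj_start r"
  have r: "Suc i \<le> r" "r \<le> n" using proj_end_gt[OF i] proj_end_le unfolding r_def by auto
  have "L \<le> Suc i" using inj_start_less[of "Suc i"] i eq unfolding L_def r_def by simp
  have "is_injective n Z (interval_rep L r :: 'k rep)"
    unfolding L_def using r by (intro is_injective_interval_rep) auto
  moreover have "is_injective n Z (interval_rep L (Suc i) :: 'k rep)"
    unfolding L_def r_def eq using i by (intro is_injective_interval_rep) auto
  ultimately show ?thesis
    unfolding inj_dim_le1_def r_def[symmetric]
    using is_hom_interval_incl[OF \<open>L \<le> Suc i\<close>] is_hom_interval_proj[OF r(1)] is_mono_interval_incl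
      is_epi_interval_proj[OF r(1)] is_exact_at_intervals[OF \<open>L \<le> Suc i\<close> r(1)]
    by blast
qed

lemma injective_lifts_interval_start:
  fixes g :: "nat \<Rightarrow> nat \<Rightarrow> nat \<Rightarrow> 'k::field"
  assumes I: "is_injective n Z I" and g: "is_hom n (interval_rep L c) I g"
    and L: "1 \<le> L" "L < c" "c \<le> n" "c \<le> proj_end (L - 1)"
  shows "\<exists>w. bvec (dimv I (L - 1)) w \<and> mvec (dimv I (L - 1)) (arr I (L - 1)) w = (\<lambda>x. g L x 0)"
proof -
  have "is_rep n Z (interval_rep L c :: 'k rep)" "is_rep n Z (interval_rep (L - 1) c :: 'k rep)"
    using L proj_end_mono[of "L - 1" L] by (auto intro!: is_rep_interval_rep)
  with I obtain h where h: "is_hom n (interval_rep (L - 1) c) I h"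
    and ext: "\<And>j. mmul (dimv (interval_rep (L - 1) c :: 'k rep) j) (h j) (interval_map L c j) = g j"
    unfolding is_injective_def
    using is_hom_interval_incl[of "L - 1" L n c, OF diff_le_self] is_mono_interval_incl[of L c] g
    by metis
  have hL: "bmat (dimv I L) 1 (h L)" using is_hom_bmat[OF h, of L] L by (simp add: dimv_interval_rep)
  have "mmul (dimv I (L - 1)) (arr I (L - 1)) (h (L - 1)) =
      mmul (dimv (interval_rep (L - 1) c :: 'k rep) L) (h L) (arr (interval_rep (L - 1) c) (L - 1))"
    using is_hom_commute[OF h, of "L - 1"] L by simp
  also have "\<dots> = g L"
    using ext[of L] L mmul_idm_right[OF hL]
    by (simp add: arr_interval_rep_idm interval_map_idm dimv_interval_rep)
  finally show ?thesis
    using bvec_column[OF is_hom_bmat[OF h, of "L - 1"]] by (metis mmul_column)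
qed

lemma interval_hom_column_dies:
  fixes h :: "nat \<Rightarrow> nat \<Rightarrow> nat \<Rightarrow> 'k::field"
  assumes I: "is_rep n Z I" and h: "is_hom n (interval_rep L r) I h"
    and L: "1 \<le> L" "L < r" "r \<le> n" "(L - 1, r - 1) \<in> Z"
    and z': "mvec (dimv I (L - 1)) (arr I (L - 1)) z' = (\<lambda>x. h L x 0)"
  shows "(\<lambda>x. h (r - 1) x 0) = (\<lambda>_. 0)"
proof -
  have I': "arrows_bounded I" using I by (rule is_rep_arrows_bounded)
  have Lr: "L \<le> r - 1" "r - 1 < n" using L by arith+
  then have "bmat (dimv I (r - 1)) 1 (h (r - 1))"
    using is_hom_bmat[OF h, of "r - 1"] L by (simp add: dimv_interval_rep)
  then have "h (r - 1) = mmul 1 (h (r - 1)) (idm 1)" by (simp add: mmul_idm_right)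
  also have "\<dots> = mmul (dimv I L) (pmap I L (r - 1)) (h L)"
    using is_hom_pmap[OF h Lr] Lr L by (simp add: pmap_interval_rep_idm dimv_interval_rep)
  finally have "(\<lambda>x. h (r - 1) x 0) = (\<lambda>x. mmul (dimv I L) (pmap I L (r - 1)) (h L) x 0)" by simp
  also have "\<dots> = mvec (dimv I (L - 1)) (pmap I (L - 1) (r - 1)) z'"
    using pmap_Suc_source[OF I', of "L - 1" "r - 1"] L z' by (simp add: mmul_column mvec_mmul)
  also have "\<dots> = (\<lambda>_. 0)" using I L(4) unfolding is_rep_def by (simp add: mvec_zero_left)
  finally show ?thesis .
qed

lemma ext_pair_iff:
  "ext_pair p q \<longleftrightarrow>
     p < n \<and> inj_start (proj_end p) \<noteq> inj_start (Suc p) \<and> q = inj_start (proj_end p) - 1"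
proof
  assume "ext_pair p q"
  then have "q < p" "p < proj_end q" "proj_end q < proj_end p" "proj_end p \<le> proj_end (Suc q)" "p < n"
    using ext_pair_less unfolding ext_pair_def by auto
  moreover have "proj_end p \<le> n" by (rule proj_end_le)
  ultimately show "p < n \<and> inj_start (proj_end p) \<noteq> inj_start (Suc p) \<and> q = inj_start (proj_end p) - 1"
    using inj_start_le_iff[of "proj_end p" "Suc q"] inj_start_le_iff[of "proj_end p" q]
      inj_start_le_iff[of "Suc p" q]
    by auto
next
  assume p: "p < n \<and> inj_start (proj_end p) \<noteq> inj_start (Suc p) \<and> q = inj_start (proj_end p) - 1"
  define L where "L = inj_start (proj_end p)"
  have rp: "Suc p \<le> proj_end p" "proj_end p \<le> n" using proj_end_gt[of p] proj_end_le p by auto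
  then have "inj_start (Suc p) < L" using inj_start_mono[OF rp] p unfolding L_def by auto
  then have "1 \<le> L" "Suc p \<le> proj_end (L - 1)" using inj_start_le_iff[of "Suc p" "L - 1"] p by auto
  moreover have "L \<le> p" "proj_end p \<le> proj_end L" "proj_end (L - 1) < proj_end p"
    using inj_start_le_iff[OF rp(2), of p] inj_start_le_iff[OF rp(2), of L]
      inj_start_le_iff[OF rp(2), of "L - 1"] \<open>1 \<le> L\<close>
    unfolding L_def by auto
  ultimately show "ext_pair p q" using p unfolding ext_pair_def L_def[symmetric] by auto
qed

lemma card_ext_pairs: "card {(p,q). ext_pair p q} = card {p. \<exists>q. ext_pair p q}"
  by (rule bij_betw_same_card[of fst]) (auto simp: bij_betw_def inj_on_def ext_pair_iff image_iff)

lemma interval_hom_column_lifts: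
  fixes h :: "nat \<Rightarrow> nat \<Rightarrow> nat \<Rightarrow> 'k::field"
  assumes I1: "is_injective n Z I1" and \<pi>: "is_hom n I0 I1 \<pi>" and epi: "is_epi I0 I1 \<pi>"
    and I0: "arrows_bounded I0" and ex: "is_exact_at M I0 \<mu> \<pi>" and M: "dimv M (Suc a) = 0"
    and h: "is_hom n (interval_rep (Suc a) r) I0 h"
    and g: "is_hom n (interval_rep (Suc a) c) I1
      (\<lambda>j. if j < c then mmul (dimv I0 j) (\<pi> j) (h j) else (\<lambda>_ _. 0))"
    and "Suc a < c" "c \<le> n" "c \<le> proj_end a"
  shows "\<exists>z'. mvec (dimv I0 a) (arr I0 a) z' = (\<lambda>x. h (Suc a) x 0)"
proof -
  obtain w where "bvec (dimv I1 a) w"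
    and w: "mvec (dimv I1 a) (arr I1 a) w = (\<lambda>x. mmul (dimv I0 (Suc a)) (\<pi> (Suc a)) (h (Suc a)) x 0)"
    using injective_lifts_interval_start[OF I1 g] assms(9-11) by auto
  then obtain z' where "mvec (dimv I0 a) (\<pi> a) z' = w" using epi unfolding is_epi_def by blast
  moreover have "mvec (dimv I1 a) (arr I1 a) w = mvec (dimv I0 (Suc a)) (\<pi> (Suc a)) (\<lambda>t. h (Suc a) t 0)"
    using w by (simp add: mmul_column)
  moreover have "Suc a < n" using assms(9,10) by simp
  ultimately show ?thesis
    using exact_arrow_preimage[OF ex M \<pi> _ I0 bvec_column[OF is_hom_bmat[OF h]]] by blast
qed

text \<open>If \<open>e\<^sub>iJ\<close> had injective dimension at most one, the morphism \<open>[a+1, r) \<rightarrow> I\<^sub>0\<close> extending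
  \<open>e\<^sub>iJ \<rightarrow> I\<^sub>0\<close> would send the generator at \<open>a + 1\<close> into the image of the arrow \<open>a \<rightarrow> a+1\<close>;
  the path \<open>a \<rightarrow> r - 1\<close> lies in \<open>Z\<close>, so its image at \<open>r - 1\<close> would vanish, but there it
  agrees with the monomorphism \<open>e\<^sub>iJ \<rightarrow> I\<^sub>0\<close>.\<close>

lemma not_inj_dim_le1_interval_rep:
  assumes "ext_pair i a"
  shows "\<not> inj_dim_le1 n Z (interval_rep (Suc i) (proj_end i) :: 'k::field rep)"
proof
  define r where "r = proj_end i"
  assume "inj_dim_le1 n Z (interval_rep (Suc i) (proj_end i) :: 'k rep)"
  then obtain I0 I1 :: "'k rep" and \<mu> \<pi> where
    I0: "is_injective n Z I0" and I1: "is_injective n Z I1"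
    and \<mu>: "is_hom n (interval_rep (Suc i) r) I0 \<mu>" and \<pi>: "is_hom n I0 I1 \<pi>"
    and mono: "is_mono (interval_rep (Suc i) r :: 'k rep) \<mu>" and epi: "is_epi I0 I1 \<pi>"
    and ex: "is_exact_at (interval_rep (Suc i) r :: 'k rep) I0 \<mu> \<pi>"
    unfolding inj_dim_le1_def r_def by blast
  have a: "a < i" "i < proj_end a" "proj_end a < r" "r \<le> proj_end (Suc a)"
    using assms unfolding ext_pair_def r_def by auto
  have r: "r \<le> n" "Suc i < r" "(a, r - 1) \<in> Z" using a proj_end_le[of i] unfolding r_def mem_Z_iff by auto
  have "is_rep n Z (interval_rep (Suc i) r :: 'k rep)" "is_rep n Z (interval_rep (Suc a) r :: 'k rep)"
    using a r proj_end_mono[of i "Suc i"] unfolding r_def by (auto intro!: is_rep_interval_rep)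
  moreover have "Suc a \<le> Suc i" using a by simp
  ultimately obtain h where h: "is_hom n (interval_rep (Suc a) r) I0 h"
    and ext: "\<And>j. mmul (dimv (interval_rep (Suc a) r :: 'k rep) j) (h j) (interval_map (Suc i) r j) = \<mu> j"
    using I0 is_hom_interval_incl is_mono_interval_incl \<mu> unfolding is_injective_def by metis
  have h\<mu>: "h j = \<mu> j" if "Suc i \<le> j" "j < r" for j
    using ext[of j] that a mmul_idm_right[of _ 1 "h j"] is_hom_bmat[OF h, of j]
    by (simp add: interval_map_idm dimv_interval_rep)
  have "mmul (dimv I0 (Suc i)) (\<pi> (Suc i)) (\<mu> (Suc i)) = (\<lambda>_ _. 0)"
    by (rule is_exact_at_comp_zero[OF ex is_hom_bmat[OF \<mu>]])
  then have "is_hom n (interval_rep (Suc a) (Suc i)) I1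
      (\<lambda>j. if j < Suc i then mmul (dimv I0 j) (\<pi> j) (h j) else (\<lambda>_ _. 0))"
    using h\<mu> r by (intro is_hom_interval_restrict[OF is_hom_comp[OF h \<pi>]]) auto
  moreover have "arrows_bounded I0"
    using I0 unfolding is_injective_def by (blast intro: is_rep_arrows_bounded)
  moreover have "dimv (interval_rep (Suc i) r :: 'k rep) (Suc a) = 0"
    using a by (simp add: dimv_interval_rep)
  ultimately obtain z' where "mvec (dimv I0 a) (arr I0 a) z' = (\<lambda>x. h (Suc a) x 0)"
    using interval_hom_column_lifts[OF I1 \<pi> epi _ ex _ h, where c = "Suc i"] a r by auto
  then have "(\<lambda>x. h (r - 1) x 0) = (\<lambda>_. 0)"
    using interval_hom_column_dies[of I0 "Suc a" r h z'] I0 h a r unfolding is_injective_def by simp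
  moreover have "(\<lambda>x. \<mu> (r - 1) x 0) \<noteq> (\<lambda>_. 0)"
    using mono_column_nonzero[OF mono, of "r - 1"] r by (simp add: dimv_interval_rep)
  ultimately show False using h\<mu>[of "r - 1"] r by simp
qed

lemma inj_dim_le1_eJ_iff:
  assumes "i < n"
  shows "inj_dim_le1 n Z (eJ n Z i :: 'k::field rep) \<longleftrightarrow> (\<nexists>q. ext_pair i q)"
  using inj_dim_le1_interval_rep[OF assms] not_inj_dim_le1_interval_rep
    eJ_eq_interval_rep[OF assms] assms
  by (metis ext_pair_iff)

end

theorem mainTheorem8:
  fixes n :: nat and Z :: "(nat \<times> nat) set"
  assumes "1 \<le> n" and "lin_nakayama_ideal n Z"
  shows "dim_Ext1 n Z (radJ n Z :: 'k::field rep) (radJ n Z)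
           = n - card {i. i < n \<and> inj_dim_le1 n Z (eJ n Z i :: 'k rep)}"
proof -
  interpret lin_nakayama n Z by (rule lin_nakayama.intro) fact
  let ?S = "{p. \<exists>q. ext_pair p q}"
  have S: "?S \<subseteq> {..<n}" by (auto simp: ext_pair_iff)
  then have "card ?S \<le> n" using card_mono[OF finite_lessThan S] by simp
  have "{i. i < n \<and> inj_dim_le1 n Z (eJ n Z i :: 'k rep)} = {..<n} - ?S"
    using inj_dim_le1_eJ_iff by auto
  then have "n - card {i. i < n \<and> inj_dim_le1 n Z (eJ n Z i :: 'k rep)} = card ?S"
    using S \<open>card ?S \<le> n\<close> by (simp add: card_Diff_subset finite_subset[OF S])
  then show ?thesis using dim_Ext1_radJ card_ext_pairs by simp
qed

end
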